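(* Let $\beta\in(-\infty,0)\cup(0,1)$, $G_\beta(u)=\frac{\beta}{|\beta|}u^\beta$, $u_0\in\ell^\infty_+(\mathbb{Z})$ with $\frac12\le u_0\le1$, and let $\Psi_*$ be a creation operator whose jump sequence satisfies $d\le L$. Then there exists a classical solution $u$ of $\partial_t u=\Delta G_\beta(u)$ in $(0,\infty)\times\mathbb{Z}$ with $u(0)=\Psi_*u_0$. Furthermore $u\le1$ and $$u(t,k)\ge c\,\big(1\wedge t^{\frac1{1-\beta}}\big)\quad\text{for all }t\ge0,\ k\in\mathbb{Z},$$ where $c>0$ depends only on $\beta$ and $L$.
   Context: $\Delta v(k)=v(k-1)-2v(k)+v(k+1)$. Creation operator: for strictly increasing $\Psi:\mathbb{Z}\to\mathbb{Z}$, $\Psi_*x(\Psi(k))=x(k)$ and $\Psi_*x(l)=0$ off $\Psi(\mathbb{Z})$; jump sequence $d$ = gaps $\Psi(k+1)-\Psi(k)-1$. A classical solution: $u\in C^0([0,\infty);\ell^\infty_+(\mathbb{Z}))$, $u(0)=\Psi_*u_0$, and for each $k$, $u(\cdot,k)\in C^1((0,\infty))$ with positive values satisfying the equation pointwise. *)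

theory Defs
  imports "HOL-Analysis.Analysis"
begin

definition dlap :: "(int \<Rightarrow> real) \<Rightarrow> int \<Rightarrow> real" where
  "dlap v k = v (k - 1) - 2 * v k + v (k + 1)"

definition Gb :: "real \<Rightarrow> real \<Rightarrow> real" where
  "Gb \<beta> x = (\<beta> / \<bar>\<beta>\<bar>) * x powr \<beta>"

definition linf_plus :: "(int \<Rightarrow> real) \<Rightarrow> bool" where
  "linf_plus v \<longleftrightarrow> (\<exists>B. \<forall>k. \<bar>v k\<bar> \<le> B) \<and> (\<forall>k. 0 \<le> v k)"

definition creation :: "(int \<Rightarrow> int) \<Rightarrow> (int \<Rightarrow> real) \<Rightarrow> int \<Rightarrow> real" where
  "creation \<Psi> x l = (if l \<in> range \<Psi> then x (inv \<Psi> l) else 0)"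

definition jumps :: "(int \<Rightarrow> int) \<Rightarrow> int \<Rightarrow> int" where
  "jumps \<Psi> k = \<Psi> (k + 1) - \<Psi> k - 1"

definition cont_linf_plus :: "(real \<Rightarrow> int \<Rightarrow> real) \<Rightarrow> bool" where
  "cont_linf_plus u \<longleftrightarrow>
     (\<forall>t\<ge>0. linf_plus (u t)) \<and>
     (\<forall>t\<ge>0. \<forall>\<epsilon>>0. \<exists>\<delta>>0. \<forall>s\<ge>0. \<bar>s - t\<bar> < \<delta> \<longrightarrow> (\<forall>k. \<bar>u s k - u t k\<bar> \<le> \<epsilon>))"

definition classical_solution :: "real \<Rightarrow> (int \<Rightarrow> real) \<Rightarrow> (real \<Rightarrow> int \<Rightarrow> real) \<Rightarrow> bool" where
  "classical_solution \<beta> w u \<longleftrightarrow>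
     cont_linf_plus u \<and> u 0 = w \<and>
     (\<forall>k. (\<forall>t>0. 0 < u t k) \<and>
          (\<exists>u'. continuous_on {0<..} u' \<and>
                (\<forall>t>0. ((\<lambda>s. u s k) has_real_derivative u' t) (at t))) \<and>
          (\<forall>t>0. ((\<lambda>s. u s k) has_real_derivative dlap (\<lambda>j. Gb \<beta> (u t j)) k) (at t)))"

end

(* The regularised problem, with created data max(Psi_* u0, delta), has values in [delta, 1],
   where G_beta is increasing and Lipschitz; adding Lambda u to both sides of u' = Delta G_beta(u)
   makes the right-hand side monotone, and the monotone Picard iteration converges to a solution.
   A comparison principle, proved by bootstrapping v - u <= (C t)^n / n!, orders solutions by
   their data.  A self-similar subsolution, a_n s^gamma with gamma = 1/(1 - beta) at distance
   n <= L to the right of the nearest created site and 1/2 - B (s + s^gamma) on created sites,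
   gives the lower bound c min(1, t^gamma) independently of delta.  Letting delta decrease to 0,
   the solutions decrease; the lower bound makes |Delta G_beta(u)| bounded by an integrable
   function of t, hence the family is equicontinuous in time with locally uniformly Lipschitz
   derivatives, and the limit is a classical solution. *)

theory Submission
  imports Defs
begin

section \<open>Calculus on the real line\<close>

lemma diff_le_diff_of_DERIV_le:
  fixes f g :: "real \<Rightarrow> real"
  assumes "a \<le> b" "continuous_on {a..b} f" "continuous_on {a..b} g"
    and "\<And>x. a < x \<Longrightarrow> x < b \<Longrightarrow>
      \<exists>df dg. (f has_real_derivative df) (at x) \<and> (g has_real_derivative dg) (at x) \<and> df \<le> dg"
  shows "f b - f a \<le> g b - g a"
proof -
  have "(\<lambda>x. g x - f x) a \<le> (\<lambda>x. g x - f x) b"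
  proof (rule DERIV_nonneg_imp_increasing_open[OF assms(1)])
    fix x assume "a < x" "x < b"
    then obtain df dg where "(f has_real_derivative df) (at x)" "(g has_real_derivative dg) (at x)" "df \<le> dg"
      using assms(4) by blast
    then show "\<exists>y. ((\<lambda>x. g x - f x) has_real_derivative y) (at x) \<and> 0 \<le> y"
      by (intro exI[of _ "dg - df"]) (auto intro!: derivative_eq_intros)
  qed (use assms(2,3) in \<open>intro continuous_intros\<close>)
  then show ?thesis by simp
qed

lemma abs_diff_le_of_DERIV_dominated:
  fixes h P :: "real \<Rightarrow> real"
  assumes "a \<le> b" "continuous_on {a..b} h" "continuous_on {a..b} P"
    and "\<And>x. a < x \<Longrightarrow> x < b \<Longrightarrow>
      \<exists>dh dP. (h has_real_derivative dh) (at x) \<and> (P has_real_derivative dP) (at x) \<and> \<bar>dh\<bar> \<le> dP"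
  shows "\<bar>h b - h a\<bar> \<le> P b - P a"
proof -
  have "h b - h a \<le> P b - P a"
  proof (rule diff_le_diff_of_DERIV_le[OF assms(1-3)])
    fix x assume "a < x" "x < b"
    with assms(4) show "\<exists>df dg. (h has_real_derivative df) (at x) \<and> (P has_real_derivative dg) (at x) \<and>
        df \<le> dg"
      by (meson abs_le_D1)
  qed
  moreover have "(\<lambda>x. - P x) b - (\<lambda>x. - P x) a \<le> h b - h a"
  proof (rule diff_le_diff_of_DERIV_le[OF assms(1) _ assms(2)])
    show "continuous_on {a..b} (\<lambda>x. - P x)" using assms(3) by (intro continuous_intros)
    fix x assume "a < x" "x < b"
    then obtain dh dP where "(h has_real_derivative dh) (at x)" "(P has_real_derivative dP) (at x)"
      "\<bar>dh\<bar> \<le> dP"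
      using assms(4) by blast
    then show "\<exists>df dg. ((\<lambda>x. - P x) has_real_derivative df) (at x) \<and> (h has_real_derivative dg) (at x) \<and>
        df \<le> dg"
      by (intro exI[of _ "- dP"] exI[of _ dh]) (auto intro!: derivative_eq_intros)
  qed
  ultimately show ?thesis by (simp add: abs_le_iff)
qed

lemma abs_diff_le_of_DERIV_bound:
  fixes h :: "real \<Rightarrow> real"
  assumes "a \<le> b" "continuous_on {a..b} h"
    and "\<And>y. a < y \<Longrightarrow> y < b \<Longrightarrow> \<exists>d. (h has_real_derivative d) (at y) \<and> \<bar>d\<bar> \<le> B"
  shows "\<bar>h b - h a\<bar> \<le> B * (b - a)"
  using abs_diff_le_of_DERIV_dominated[OF assms(1,2), of "\<lambda>y. B * y"] assms(3)
  by (fastforce intro: continuous_intros derivative_eq_intros simp: algebra_simps)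

text \<open>Comparison with an integrating factor: \<open>e\<^sup>\<Lambda>\<^sup>s (f s - g s)\<close> is nonincreasing.\<close>

lemma le_of_DERIV_plus_linear_le:
  fixes f g :: "real \<Rightarrow> real"
  assumes "0 \<le> t" "continuous_on {0..t} f" "continuous_on {0..t} g" "f 0 \<le> g 0"
    and "\<And>x. 0 < x \<Longrightarrow> x < t \<Longrightarrow> \<exists>df dg. (f has_real_derivative df) (at x) \<and>
           (g has_real_derivative dg) (at x) \<and> df + \<Lambda> * f x \<le> dg + \<Lambda> * g x"
  shows "f t \<le> g t"
proof -
  define H where "H = (\<lambda>s. exp (\<Lambda> * s) * (f s - g s))"
  have "H t - H 0 \<le> (\<lambda>_. 0::real) t - (\<lambda>_. 0::real) 0"
  proof (rule diff_le_diff_of_DERIV_le[OF assms(1)])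
    show "continuous_on {0..t} H" unfolding H_def using assms(2,3) by (intro continuous_intros)
    fix x assume "0 < x" "x < t"
    then obtain df dg where d: "(f has_real_derivative df) (at x)" "(g has_real_derivative dg) (at x)"
      and le: "df + \<Lambda> * f x \<le> dg + \<Lambda> * g x"
      using assms(5) by blast
    have "(H has_real_derivative exp (\<Lambda> * x) * ((df + \<Lambda> * f x) - (dg + \<Lambda> * g x))) (at x)"
      unfolding H_def using d by (auto intro!: derivative_eq_intros simp: algebra_simps)
    moreover have "exp (\<Lambda> * x) * ((df + \<Lambda> * f x) - (dg + \<Lambda> * g x)) \<le> 0"
      using le by (simp add: mult_nonneg_nonpos)
    ultimately show "\<exists>df dg. (H has_real_derivative df) (at x) \<and> ((\<lambda>_. 0) has_real_derivative dg) (at x) \<and>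
        df \<le> dg"
      by (auto intro: derivative_intros)
  qed simp
  then have "exp (\<Lambda> * t) * (f t - g t) \<le> 0" using assms(4) unfolding H_def by simp
  then show ?thesis by (simp add: mult_le_0_iff)
qed

lemma Taylor1_remainder_le_of_Lipschitz_DERIV:
  fixes f D :: "real \<Rightarrow> real"
  assumes r: "0 < r"
    and df: "\<And>x. \<bar>x - t\<bar> < r \<Longrightarrow> (f has_real_derivative D x) (at x)"
    and dl: "\<And>x. \<bar>x - t\<bar> < r \<Longrightarrow> \<bar>D x - D t\<bar> \<le> M * \<bar>x - t\<bar>"
    and x: "\<bar>x - t\<bar> < r"
  shows "\<bar>f x - f t - D t * (x - t)\<bar> \<le> M * (x - t)^2"
proof -
  define h where "h = (\<lambda>y. f y - D t * y)"
  have hd: "(h has_real_derivative D y - D t) (at y)" if "\<bar>y - t\<bar> < r" for y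
    unfolding h_def using df[OF that] by (auto intro!: derivative_eq_intros)
  define a b where "a = min x t" and "b = max x t"
  have between: "\<bar>y - t\<bar> \<le> \<bar>x - t\<bar>" if "a \<le> y" "y \<le> b" for y
    using that unfolding a_def b_def by (auto simp: abs_if min_def max_def split: if_splits)
  have "\<bar>h b - h a\<bar> \<le> M * \<bar>x - t\<bar> * (b - a)"
  proof (rule abs_diff_le_of_DERIV_bound)
    show "a \<le> b" unfolding a_def b_def by simp
    have "(h has_real_derivative D y - D t) (at y within {a..b})" if "y \<in> {a..b}" for y
      using hd between[of y] that x by (auto intro: has_field_derivative_at_within)
    then show "continuous_on {a..b} h" by (rule DERIV_continuous_on)
    fix y assume y: "a < y" "y < b"
    have yx: "\<bar>y - t\<bar> \<le> \<bar>x - t\<bar>" using between y by simp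
    have yr: "\<bar>y - t\<bar> < r" using yx x by simp
    have "y \<noteq> t" using y unfolding a_def b_def by auto
    then have "0 < \<bar>y - t\<bar>" by simp
    moreover have "0 \<le> M * \<bar>y - t\<bar>" using dl[OF yr] abs_ge_zero order_trans by blast
    ultimately have M0: "0 \<le> M" by (simp add: zero_le_mult_iff)
    have "\<bar>D y - D t\<bar> \<le> M * \<bar>x - t\<bar>" using dl[OF yr] yx M0 by (meson mult_left_mono order_trans)
    then show "\<exists>d. (h has_real_derivative d) (at y) \<and> \<bar>d\<bar> \<le> M * \<bar>x - t\<bar>"
      using hd[OF yr] by blast
  qed
  moreover have "b - a = \<bar>x - t\<bar>" "\<bar>h b - h a\<bar> = \<bar>h x - h t\<bar>"
    unfolding a_def b_def by (auto simp: abs_minus_commute min_def max_def)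
  moreover have "h x - h t = f x - f t - D t * (x - t)" unfolding h_def by (simp add: algebra_simps)
  moreover have "(x - t)^2 = \<bar>x - t\<bar> * \<bar>x - t\<bar>" by (simp add: power2_eq_square)
  ultimately show ?thesis by (simp add: mult.assoc)
qed

text \<open>The first order Taylor remainders are \<open>O((x - t)\<^sup>2)\<close> uniformly in \<open>n\<close>, so this
  bound survives the limit.\<close>

lemma has_real_derivative_of_Lipschitz_DERIV_seq:
  fixes f D :: "nat \<Rightarrow> real \<Rightarrow> real"
  assumes r: "0 < r"
    and df: "\<And>n x. \<bar>x - t\<bar> < r \<Longrightarrow> (f n has_real_derivative D n x) (at x)"
    and dl: "\<And>n x. \<bar>x - t\<bar> < r \<Longrightarrow> \<bar>D n x - D n t\<bar> \<le> M * \<bar>x - t\<bar>"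
    and fl: "\<And>x. \<bar>x - t\<bar> < r \<Longrightarrow> (\<lambda>n. f n x) \<longlonglongrightarrow> g x"
    and Dl: "(\<lambda>n. D n t) \<longlonglongrightarrow> d"
  shows "(g has_real_derivative d) (at t)"
proof -
  have M0: "0 \<le> M"
  proof -
    have "\<bar>(t + r/2) - t\<bar> < r" using r by simp
    then have "0 \<le> M * \<bar>(t + r/2) - t\<bar>" using dl[of "t + r/2" 0] abs_ge_zero order_trans by blast
    moreover have "0 < \<bar>(t + r/2) - t\<bar>" using r by simp
    ultimately show ?thesis by (simp add: zero_le_mult_iff)
  qed
  have remainder: "\<bar>g x - g t - d * (x - t)\<bar> \<le> M * (x - t)^2" if x: "\<bar>x - t\<bar> < r" for x
  proof -
    have "(\<lambda>n. \<bar>f n x - f n t - D n t * (x - t)\<bar>) \<longlonglongrightarrow> \<bar>g x - g t - d * (x - t)\<bar>"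
      using fl[OF x] fl[of t] Dl r by (intro tendsto_intros) auto
    then show ?thesis
      using Taylor1_remainder_le_of_Lipschitz_DERIV[OF r df dl x] by (intro LIMSEQ_le_const2) auto
  qed
  show ?thesis
    unfolding has_field_derivative_iff LIM_eq
  proof (intro allI impI)
    fix e :: real assume e: "0 < e"
    show "\<exists>s>0. \<forall>x. x \<noteq> t \<and> norm (x - t) < s \<longrightarrow> norm ((g x - g t) / (x - t) - d) < e"
    proof (intro exI[of _ "min r (e / (M + 1))"] conjI allI impI)
      show "0 < min r (e / (M + 1))" using r e M0 by auto
      fix x assume x: "x \<noteq> t \<and> norm (x - t) < min r (e / (M + 1))"
      then have xr: "\<bar>x - t\<bar> < r" and nz: "0 < \<bar>x - t\<bar>" by auto
      have "\<bar>x - t\<bar> < e / (M + 1)" using x by simp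
      then have xe: "(M + 1) * \<bar>x - t\<bar> < e" using M0 by (simp add: field_simps)
      have "(g x - g t) / (x - t) - d = (g x - g t - d * (x - t)) / (x - t)"
        using x by (simp add: field_simps)
      then have "\<bar>(g x - g t) / (x - t) - d\<bar> = \<bar>g x - g t - d * (x - t)\<bar> / \<bar>x - t\<bar>"
        by (simp add: abs_divide)
      also have "\<dots> \<le> M * (\<bar>x - t\<bar> * \<bar>x - t\<bar>) / \<bar>x - t\<bar>"
        using remainder[OF xr] nz by (intro divide_right_mono) (auto simp: power2_eq_square)
      also have "\<dots> = M * \<bar>x - t\<bar>"
        using nz by (metis less_irrefl mult.assoc nonzero_mult_div_cancel_right)
      also have "\<dots> \<le> (M + 1) * \<bar>x - t\<bar>" by (simp add: distrib_right)
      also have "\<dots> < e" by (rule xe)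
      finally show "norm ((g x - g t) / (x - t) - d) < e" by simp
    qed
  qed
qed

lemma integral_0_has_real_derivative:
  fixes f :: "real \<Rightarrow> real"
  assumes "continuous_on {0..} f" "0 \<le> t"
  shows "((\<lambda>t. integral {0..t} f) has_real_derivative f t) (at t within {0..t + 1})"
  using assms by (intro integral_has_real_derivative) (auto elim: continuous_on_subset)

lemma continuous_on_integral_0:
  fixes f :: "real \<Rightarrow> real"
  assumes "continuous_on {0..} f"
  shows "continuous_on {0..} (\<lambda>t. integral {0..t} f)"
  unfolding continuous_on_eq_continuous_within
proof
  fix x :: real assume "x \<in> {0..}"
  then have "continuous (at x within {0..x+1}) (\<lambda>t. integral {0..t} f)"
    using integral_0_has_real_derivative[OF assms] by (auto intro: DERIV_continuous)
  moreover have "at x within {0..} = at x within {0..x+1}"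
    by (rule at_within_nhd[of _ "{..<x+1}"]) auto
  ultimately show "continuous (at x within {0..}) (\<lambda>t. integral {0..t} f)"
    by (simp add: continuous_within)
qed

lemma integral_0_has_real_derivative_at:
  fixes f :: "real \<Rightarrow> real"
  assumes "continuous_on {0..} f" "0 < t"
  shows "((\<lambda>t. integral {0..t} f) has_real_derivative f t) (at t)"
proof -
  have "at t within {0..t + 1} = at t" using assms(2) by (intro at_within_interior) auto
  moreover have "((\<lambda>t. integral {0..t} f) has_real_derivative f t) (at t within {0..t + 1})"
    using integral_0_has_real_derivative[OF assms(1)] assms(2) by simp
  ultimately show ?thesis by simp
qed

lemma continuous_on_of_dominated_increments:
  fixes f g :: "real \<Rightarrow> real"
  assumes "\<And>s t. s \<in> S \<Longrightarrow> t \<in> S \<Longrightarrow> \<bar>f s - f t\<bar> \<le> \<bar>g s - g t\<bar>" "continuous_on S g"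
  shows "continuous_on S f"
  unfolding continuous_on_iff
proof (intro ballI allI impI)
  fix x e assume x: "x \<in> S" and e: "(0::real) < e"
  then obtain d where d: "d > 0" "\<And>x'. x' \<in> S \<Longrightarrow> dist x' x < d \<Longrightarrow> dist (g x') (g x) < e"
    using assms(2) unfolding continuous_on_iff by blast
  have "dist (f x') (f x) < e" if "x' \<in> S" "dist x' x < d" for x'
    using assms(1)[OF that(1) x] d(2)[OF that] unfolding dist_real_def by linarith
  with d(1) show "\<exists>d>0. \<forall>x'\<in>S. dist x' x < d \<longrightarrow> dist (f x') (f x) < e" by blast
qed

lemma power_over_fact_tendsto_0: "(\<lambda>n. (x::real) ^ n / fact n) \<longlonglongrightarrow> 0"
  using summable_LIMSEQ_zero[OF summable_exp[of x]] by (simp add: field_simps)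

lemma DERIV_power_over_fact:
  "((\<lambda>s. (C * s) ^ Suc n / fact (Suc n)) has_real_derivative C * ((C * x) ^ n / fact n)) (at x)"
proof -
  have "((\<lambda>s. (C * s) ^ Suc n / fact (Suc n)) has_real_derivative
        (real (Suc n) * (C * x) ^ n * C) / fact (Suc n)) (at x)"
    by (auto intro!: derivative_eq_intros simp del: fact_Suc power_Suc)
  moreover have "(real (Suc n) * (C * x) ^ n * C) / fact (Suc n) = C * ((C * x) ^ n / fact n)"
    by (simp add: fact_Suc field_simps del: of_nat_Suc)
  ultimately show ?thesis by (rule DERIV_cong)
qed

section \<open>The nonlinearity and the comparison principle\<close>

lemma Gb_of_pos: "0 < \<beta> \<Longrightarrow> Gb \<beta> x = x powr \<beta>"
  unfolding Gb_def by simp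

lemma Gb_of_neg: "\<beta> < 0 \<Longrightarrow> Gb \<beta> x = - (x powr \<beta>)"
  unfolding Gb_def by simp

lemma Gb_has_real_derivative:
  assumes "\<beta> \<noteq> 0" "0 < x"
  shows "(Gb \<beta> has_real_derivative \<bar>\<beta>\<bar> * x powr (\<beta> - 1)) (at x)"
proof -
  have "((\<lambda>x. \<beta> / \<bar>\<beta>\<bar> * x powr \<beta>) has_real_derivative \<beta> / \<bar>\<beta>\<bar> * (\<beta> * x powr (\<beta> - 1))) (at x)"
    using assms by (intro DERIV_cmult has_real_derivative_powr) auto
  moreover have "\<beta> / \<bar>\<beta>\<bar> * (\<beta> * x powr (\<beta> - 1)) = \<bar>\<beta>\<bar> * x powr (\<beta> - 1)"
    using assms(1) by (cases "\<beta> > 0") (auto simp: field_simps)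
  ultimately show ?thesis unfolding Gb_def[abs_def] by simp
qed

lemma continuous_on_Gb: "\<beta> \<noteq> 0 \<Longrightarrow> continuous_on {0<..} (Gb \<beta>)"
  unfolding Gb_def[abs_def] by (intro continuous_intros) auto

lemma continuous_on_Gb_comp:
  assumes "\<beta> \<noteq> 0" "continuous_on S f" "\<And>s. s \<in> S \<Longrightarrow> 0 < f s"
  shows "continuous_on S (\<lambda>s. Gb \<beta> (f s))"
  unfolding Gb_def using assms by (intro continuous_intros) force+

lemma Gb_mono:
  assumes "\<beta> \<noteq> 0" "0 < x" "x \<le> y"
  shows "Gb \<beta> x \<le> Gb \<beta> y"
proof -
  have "(\<lambda>_. 0::real) y - (\<lambda>_. 0::real) x \<le> Gb \<beta> y - Gb \<beta> x"
  proof (rule diff_le_diff_of_DERIV_le[OF assms(3)])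
    show "continuous_on {x..y} (Gb \<beta>)"
      using continuous_on_Gb[OF assms(1)] by (rule continuous_on_subset) (use assms in auto)
    fix z assume "x < z" "z < y"
    then show "\<exists>df dg. ((\<lambda>_. 0) has_real_derivative df) (at z) \<and> (Gb \<beta> has_real_derivative dg) (at z) \<and>
        df \<le> dg"
      using assms
      by (intro exI[of _ 0] exI[of _ "\<bar>\<beta>\<bar> * z powr (\<beta> - 1)"]) (auto intro!: Gb_has_real_derivative)
  qed simp
  then show ?thesis by simp
qed

lemma abs_dlap_diff_le:
  assumes "\<And>j. \<bar>f j - g j\<bar> \<le> e"
  shows "\<bar>dlap f k - dlap g k\<bar> \<le> 4 * e"
  using assms[of "k - 1"] assms[of k] assms[of "k + 1"] unfolding dlap_def by (simp add: abs_le_iff)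

definition Gb_Lipschitz_const :: "real \<Rightarrow> real \<Rightarrow> real" where
  "Gb_Lipschitz_const \<beta> \<eta> = \<bar>\<beta>\<bar> * \<eta> powr (\<beta> - 1)"

lemma Gb_Lipschitz_const_nonneg: "0 \<le> Gb_Lipschitz_const \<beta> \<eta>"
  unfolding Gb_Lipschitz_const_def by simp

lemma Gb_diff_le:
  assumes "\<beta> \<noteq> 0" "\<beta> < 1" "0 < \<eta>" "\<eta> \<le> x" "x \<le> y"
  shows "Gb \<beta> y - Gb \<beta> x \<le> Gb_Lipschitz_const \<beta> \<eta> * (y - x)"
proof -
  let ?K = "Gb_Lipschitz_const \<beta> \<eta>"
  have "Gb \<beta> y - Gb \<beta> x \<le> (\<lambda>z. ?K * z) y - (\<lambda>z. ?K * z) x"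
  proof (rule diff_le_diff_of_DERIV_le[OF assms(5)])
    show "continuous_on {x..y} (Gb \<beta>)"
      using continuous_on_Gb[OF assms(1)] by (rule continuous_on_subset) (use assms in auto)
    fix z assume z: "x < z" "z < y"
    have "z powr (\<beta> - 1) \<le> \<eta> powr (\<beta> - 1)"
      using assms z by (intro powr_mono2') auto
    then have "\<bar>\<beta>\<bar> * z powr (\<beta> - 1) \<le> ?K"
      unfolding Gb_Lipschitz_const_def by (simp add: mult_left_mono)
    then show "\<exists>df dg. (Gb \<beta> has_real_derivative df) (at z) \<and>
        ((\<lambda>z. ?K * z) has_real_derivative dg) (at z) \<and> df \<le> dg"
      using assms z by (intro exI[of _ "\<bar>\<beta>\<bar> * z powr (\<beta> - 1)"] exI[of _ ?K])
        (auto intro!: Gb_has_real_derivative derivative_eq_intros)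
  qed (intro continuous_intros)
  then show ?thesis by (simp add: algebra_simps)
qed

lemma abs_Gb_diff_le:
  assumes "\<beta> \<noteq> 0" "\<beta> < 1" "0 < \<eta>" "\<eta> \<le> x" "\<eta> \<le> y"
  shows "\<bar>Gb \<beta> y - Gb \<beta> x\<bar> \<le> Gb_Lipschitz_const \<beta> \<eta> * \<bar>y - x\<bar>"
proof (cases "x \<le> y")
  case True
  then show ?thesis
    using Gb_mono[OF assms(1) _ True] Gb_diff_le[OF assms(1-4) True] assms by simp
next
  case False
  then show ?thesis
    using Gb_mono[OF assms(1), of y x] Gb_diff_le[OF assms(1-3,5), of x] assms by simp
qed

text \<open>Since \<open>G\<^sub>\<beta>\<close> is increasing, only an upper bound on \<open>y - x\<close> is needed.\<close>

lemma dlap_Gb_diff_le: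
  assumes "\<beta> \<noteq> 0" "\<beta> < 1" "0 < \<eta>" "0 \<le> b"
    and "\<And>j. \<eta> \<le> x j" "\<And>j. \<eta> \<le> y j" "\<And>j. y j - x j \<le> b"
  defines "K \<equiv> Gb_Lipschitz_const \<beta> \<eta>"
  shows "2 * K * (y k - x k) + (dlap (\<lambda>j. Gb \<beta> (y j)) k - dlap (\<lambda>j. Gb \<beta> (x j)) k) \<le> 4 * K * b"
proof -
  have K0: "0 \<le> K" unfolding K_def by (rule Gb_Lipschitz_const_nonneg)
  have side: "Gb \<beta> (y j) - Gb \<beta> (x j) \<le> K * b" for j
  proof (cases "x j \<le> y j")
    case True
    have "Gb \<beta> (y j) - Gb \<beta> (x j) \<le> K * (y j - x j)"
      unfolding K_def using Gb_diff_le[OF assms(1-3)] assms(5) True .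
    also have "\<dots> \<le> K * b" using assms(7) K0 by (intro mult_left_mono) auto
    finally show ?thesis .
  next
    case False
    have "0 < y j" using assms(3) assms(6)[of j] by linarith
    then have "Gb \<beta> (y j) \<le> Gb \<beta> (x j)" using Gb_mono[OF assms(1)] False by simp
    moreover have "0 \<le> K * b" using K0 assms(4) by simp
    ultimately show ?thesis by linarith
  qed
  have centre: "2 * K * (y k - x k) - 2 * (Gb \<beta> (y k) - Gb \<beta> (x k)) \<le> 2 * K * b"
  proof (cases "x k \<le> y k")
    case True
    have "0 < x k" using assms(3) assms(5)[of k] by linarith
    then have "Gb \<beta> (x k) \<le> Gb \<beta> (y k)" using Gb_mono[OF assms(1)] True by simp
    then have "2 * K * (y k - x k) - 2 * (Gb \<beta> (y k) - Gb \<beta> (x k)) \<le> 2 * K * (y k - x k)" by simp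
    also have "\<dots> \<le> 2 * K * b" using assms(7) K0 by (intro mult_left_mono) auto
    finally show ?thesis .
  next
    case False
    then have "Gb \<beta> (x k) - Gb \<beta> (y k) \<le> K * (x k - y k)"
      unfolding K_def using Gb_diff_le[OF assms(1-3) assms(6)] by simp
    then have "2 * K * (y k - x k) - 2 * (Gb \<beta> (y k) - Gb \<beta> (x k)) \<le> 0"
      by (simp add: algebra_simps)
    moreover have "0 \<le> 2 * K * b" using K0 assms(4) by simp
    ultimately show ?thesis by linarith
  qed
  have "2 * K * (y k - x k) + (dlap (\<lambda>j. Gb \<beta> (y j)) k - dlap (\<lambda>j. Gb \<beta> (x j)) k)
      = (Gb \<beta> (y (k - 1)) - Gb \<beta> (x (k - 1)))
        + (2 * K * (y k - x k) - 2 * (Gb \<beta> (y k) - Gb \<beta> (x k)))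
        + (Gb \<beta> (y (k + 1)) - Gb \<beta> (x (k + 1)))"
    unfolding dlap_def by (simp add: algebra_simps)
  also have "\<dots> \<le> K * b + 2 * K * b + K * b"
    using side[of "k - 1"] centre side[of "k + 1"] by (intro add_mono)
  finally show ?thesis by (simp add: algebra_simps)
qed

text \<open>Without decay in \<open>k\<close> there is no maximum principle at hand; instead the bound
  \<open>v - u \<le> (C t)\<^sup>n / n!\<close> is bootstrapped through the one-sided Lipschitz estimate.\<close>

lemma comparison_principle:
  fixes u v :: "real \<Rightarrow> int \<Rightarrow> real"
  assumes \<beta>: "\<beta> \<noteq> 0" "\<beta> < 1" and \<eta>: "0 < \<eta>"
    and cu: "\<And>k. continuous_on {0..T} (\<lambda>t. u t k)"
    and cv: "\<And>k. continuous_on {0..T} (\<lambda>t. v t k)"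
    and du: "\<And>k t. 0 < t \<Longrightarrow> t < T \<Longrightarrow>
               \<exists>d. ((\<lambda>s. u s k) has_real_derivative d) (at t) \<and> dlap (\<lambda>j. Gb \<beta> (u t j)) k \<le> d"
    and dv: "\<And>k t. 0 < t \<Longrightarrow> t < T \<Longrightarrow>
               \<exists>d. ((\<lambda>s. v s k) has_real_derivative d) (at t) \<and> d \<le> dlap (\<lambda>j. Gb \<beta> (v t j)) k"
    and bu: "\<And>k t. 0 \<le> t \<Longrightarrow> t \<le> T \<Longrightarrow> \<eta> \<le> u t k \<and> u t k \<le> 1"
    and bv: "\<And>k t. 0 \<le> t \<Longrightarrow> t \<le> T \<Longrightarrow> \<eta> \<le> v t k \<and> v t k \<le> 1"
    and init: "\<And>k. v 0 k \<le> u 0 k"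
    and t: "0 \<le> t" "t \<le> T"
  shows "v t k \<le> u t k"
proof -
  define K where "K = Gb_Lipschitz_const \<beta> \<eta>"
  define B where "B = (\<lambda>n s. (4 * K * s) ^ n / fact n :: real)"
  have K0: "0 \<le> K" unfolding K_def by (rule Gb_Lipschitz_const_nonneg)
  have B0: "0 \<le> B n s" if "0 \<le> s" for n s
    using that K0 unfolding B_def by simp
  have "\<forall>k t. 0 \<le> t \<longrightarrow> t \<le> T \<longrightarrow> v t k - u t k \<le> B n t" for n
  proof (induction n)
    case 0
    show ?case using bu bv \<eta> unfolding B_def by (smt (verit) fact_0 power_0 div_by_1)
  next
    case (Suc n)
    show ?case
    proof (intro allI impI)
      fix k t assume t: "0 \<le> t" "t \<le> T"
      show "v t k - u t k \<le> B (Suc n) t"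
      proof (rule le_of_DERIV_plus_linear_le[where \<Lambda> = "2 * K", OF t(1)])
        show "continuous_on {0..t} (\<lambda>s. v s k - u s k)"
          using cu[of k] cv[of k] t by (intro continuous_intros) (auto elim: continuous_on_subset)
        show "continuous_on {0..t} (B (Suc n))" unfolding B_def by (intro continuous_intros) auto
        show "v 0 k - u 0 k \<le> B (Suc n) 0" using init[of k] unfolding B_def by simp
        fix x assume x: "0 < x" "x < t"
        obtain dU where dU: "((\<lambda>s. u s k) has_real_derivative dU) (at x)" "dlap (\<lambda>j. Gb \<beta> (u x j)) k \<le> dU"
          using du[of x k] x t by auto
        obtain dV where dV: "((\<lambda>s. v s k) has_real_derivative dV) (at x)" "dV \<le> dlap (\<lambda>j. Gb \<beta> (v x j)) k"
          using dv[of x k] x t by auto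
        have "2 * K * (v x k - u x k) + (dlap (\<lambda>j. Gb \<beta> (v x j)) k - dlap (\<lambda>j. Gb \<beta> (u x j)) k)
              \<le> 4 * K * B n x"
          unfolding K_def using Suc.IH bu bv x t B0[of x n]
          by (intro dlap_Gb_diff_le[OF \<beta> \<eta>]) auto
        moreover have "0 \<le> 2 * K * B (Suc n) x" using K0 B0[of x] x by simp
        ultimately have "(dV - dU) + 2 * K * (v x k - u x k) \<le> 4 * K * B n x + 2 * K * B (Suc n) x"
          using dU(2) dV(2) by linarith
        moreover have "((\<lambda>s. v s k - u s k) has_real_derivative dV - dU) (at x)"
          using dV(1) dU(1) by (rule DERIV_diff)
        moreover have "(B (Suc n) has_real_derivative 4 * K * B n x) (at x)"
          unfolding B_def by (rule DERIV_power_over_fact)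
        ultimately show "\<exists>df dg. ((\<lambda>s. v s k - u s k) has_real_derivative df) (at x) \<and>
            (B (Suc n) has_real_derivative dg) (at x) \<and>
            df + 2 * K * (v x k - u x k) \<le> dg + 2 * K * B (Suc n) x"
          by blast
      qed
    qed
  qed
  moreover have "(\<lambda>n. B n t) \<longlonglongrightarrow> 0" unfolding B_def by (rule power_over_fact_tendsto_0)
  ultimately have "v t k - u t k \<le> 0"
    using t by (intro LIMSEQ_le_const[where X = "\<lambda>n. B n t"]) auto
  then show ?thesis by simp
qed

section \<open>Solutions with data bounded away from zero\<close>

definition strip_path :: "real \<Rightarrow> (real \<Rightarrow> int \<Rightarrow> real) \<Rightarrow> bool" where
  "strip_path \<delta> Y \<longleftrightarrow>
     (\<forall>k. continuous_on {0..} (\<lambda>t. Y t k)) \<and> (\<forall>k t. 0 \<le> t \<longrightarrow> \<delta> \<le> Y t k \<and> Y t k \<le> 1)"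

definition strip_solution :: "real \<Rightarrow> real \<Rightarrow> (int \<Rightarrow> real) \<Rightarrow> (real \<Rightarrow> int \<Rightarrow> real) \<Rightarrow> bool" where
  "strip_solution \<beta> \<delta> w U \<longleftrightarrow> U 0 = w \<and> strip_path \<delta> U \<and>
     (\<forall>k t. 0 < t \<longrightarrow> ((\<lambda>s. U s k) has_real_derivative dlap (\<lambda>j. Gb \<beta> (U t j)) k) (at t))"

lemma strip_solutionD:
  assumes "strip_solution \<beta> \<delta> w U"
  shows "U 0 = w" "continuous_on {0..} (\<lambda>t. U t k)"
    and "0 \<le> t \<Longrightarrow> \<delta> \<le> U t k" "0 \<le> t \<Longrightarrow> U t k \<le> 1"
    and "0 < t \<Longrightarrow> ((\<lambda>s. U s k) has_real_derivative dlap (\<lambda>j. Gb \<beta> (U t j)) k) (at t)"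
  using assms unfolding strip_solution_def strip_path_def by auto

text \<open>Adding \<open>\<Lambda> u\<close> to both sides of \<open>u' = \<Delta> G\<^sub>\<beta>(u)\<close> makes the right-hand side monotone in \<open>u\<close>
  on \<open>[\<delta>, 1]\<close>, so that the Picard iteration for \<open>u' + \<Lambda> u = \<Delta> G\<^sub>\<beta>(u) + \<Lambda> u\<close> is monotone.\<close>

definition picard_rhs :: "real \<Rightarrow> real \<Rightarrow> (int \<Rightarrow> real) \<Rightarrow> int \<Rightarrow> real" where
  "picard_rhs \<beta> \<Lambda> x k = dlap (\<lambda>j. Gb \<beta> (x j)) k + \<Lambda> * x k"

definition picard_step ::
    "real \<Rightarrow> real \<Rightarrow> (int \<Rightarrow> real) \<Rightarrow> (real \<Rightarrow> int \<Rightarrow> real) \<Rightarrow> real \<Rightarrow> int \<Rightarrow> real" where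
  "picard_step \<beta> \<Lambda> w Y t k =
     exp (- \<Lambda> * t) * (w k + integral {0..t} (\<lambda>s. exp (\<Lambda> * s) * picard_rhs \<beta> \<Lambda> (Y s) k))"

lemma picard_step_0: "picard_step \<beta> \<Lambda> w Y 0 k = w k"
  unfolding picard_step_def by simp

definition picard_iterate ::
    "real \<Rightarrow> real \<Rightarrow> (int \<Rightarrow> real) \<Rightarrow> real \<Rightarrow> nat \<Rightarrow> real \<Rightarrow> int \<Rightarrow> real" where
  "picard_iterate \<beta> \<Lambda> w \<delta> n = (picard_step \<beta> \<Lambda> w ^^ n) (\<lambda>_ _. \<delta>)"

lemma picard_iterate_Suc:
  "picard_iterate \<beta> \<Lambda> w \<delta> (Suc n) = picard_step \<beta> \<Lambda> w (picard_iterate \<beta> \<Lambda> w \<delta> n)"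
  unfolding picard_iterate_def by simp

context
  fixes \<beta> \<delta> \<Lambda> :: real
  assumes \<beta>: "\<beta> \<noteq> 0" "\<beta> < 1" and \<delta>: "0 < \<delta>" "\<delta> \<le> 1"
    and \<Lambda>: "2 * Gb_Lipschitz_const \<beta> \<delta> \<le> \<Lambda>"
begin

lemma picard_weight_nonneg: "0 \<le> \<Lambda>"
  using \<Lambda> Gb_Lipschitz_const_nonneg[of \<beta> \<delta>] by linarith

lemma picard_rhs_mono:
  assumes "\<And>j. \<delta> \<le> x j \<and> x j \<le> y j"
  shows "picard_rhs \<beta> \<Lambda> x k \<le> picard_rhs \<beta> \<Lambda> y k"
proof -
  have side: "Gb \<beta> (x j) \<le> Gb \<beta> (y j)" for j
    using Gb_mono[OF \<beta>(1), of "x j" "y j"] assms[of j] \<delta> by auto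
  have "2 * (Gb \<beta> (y k) - Gb \<beta> (x k)) \<le> 2 * (Gb_Lipschitz_const \<beta> \<delta> * (y k - x k))"
    using Gb_diff_le[OF \<beta> \<delta>(1), of "x k" "y k"] assms[of k] by auto
  also have "\<dots> \<le> \<Lambda> * (y k - x k)"
    using \<Lambda> assms[of k] by (simp add: mult.assoc[symmetric] mult_right_mono)
  finally show ?thesis
    unfolding picard_rhs_def dlap_def using side[of "k - 1"] side[of "k + 1"] by (simp add: algebra_simps)
qed

lemma picard_rhs_bounds:
  assumes "\<And>j. \<delta> \<le> x j \<and> x j \<le> 1"
  shows "\<Lambda> * \<delta> \<le> picard_rhs \<beta> \<Lambda> x k \<and> picard_rhs \<beta> \<Lambda> x k \<le> \<Lambda>"
proof -
  have const: "picard_rhs \<beta> \<Lambda> (\<lambda>_. c) k = \<Lambda> * c" for c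
    unfolding picard_rhs_def dlap_def by simp
  show ?thesis
    using picard_rhs_mono[of "\<lambda>_. \<delta>" x k] picard_rhs_mono[of x "\<lambda>_. 1" k] assms \<delta>
    unfolding const by auto
qed

lemma picard_rhs_Lipschitz:
  assumes "\<And>j. \<delta> \<le> x j \<and> \<delta> \<le> y j \<and> \<bar>x j - y j\<bar> \<le> e"
  shows "\<bar>picard_rhs \<beta> \<Lambda> x k - picard_rhs \<beta> \<Lambda> y k\<bar> \<le> (4 * Gb_Lipschitz_const \<beta> \<delta> + \<Lambda>) * e"
proof -
  define K where "K = Gb_Lipschitz_const \<beta> \<delta>"
  have K0: "0 \<le> K" unfolding K_def by (rule Gb_Lipschitz_const_nonneg)
  have side: "\<bar>Gb \<beta> (x j) - Gb \<beta> (y j)\<bar> \<le> K * e" for j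
  proof -
    have "\<bar>Gb \<beta> (x j) - Gb \<beta> (y j)\<bar> \<le> K * \<bar>x j - y j\<bar>"
      unfolding K_def using abs_Gb_diff_le[OF \<beta> \<delta>(1), of "y j" "x j"] assms[of j] by auto
    also have "\<dots> \<le> K * e" using assms[of j] K0 by (intro mult_left_mono) auto
    finally show ?thesis .
  qed
  have "\<bar>\<Lambda> * x k - \<Lambda> * y k\<bar> \<le> \<Lambda> * e"
    using assms[of k] \<Lambda> K0 unfolding K_def
    by (simp add: abs_mult right_diff_distrib[symmetric] mult_left_mono)
  then show ?thesis
    unfolding picard_rhs_def dlap_def K_def[symmetric]
    using side[of "k - 1"] side[of k] side[of "k + 1"] by (simp add: algebra_simps abs_le_iff)
qed

lemma continuous_on_picard_rhs:
  assumes "strip_path \<delta> Y"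
  shows "continuous_on {0..} (\<lambda>s. picard_rhs \<beta> \<Lambda> (Y s) k)"
proof -
  have "0 < Y s j" if "s \<in> {0..}" for s j
  proof -
    have "\<delta> \<le> Y s j" using assms that unfolding strip_path_def by auto
    then show ?thesis using \<delta> by linarith
  qed
  then show ?thesis
    using assms unfolding picard_rhs_def dlap_def strip_path_def
    by (intro continuous_intros continuous_on_Gb_comp[OF \<beta>(1)]) auto
qed

lemma picard_step_has_real_derivative:
  assumes "strip_path \<delta> Y" "0 < t"
  shows "((\<lambda>s. picard_step \<beta> \<Lambda> w Y s k) has_real_derivative
           - \<Lambda> * picard_step \<beta> \<Lambda> w Y t k + picard_rhs \<beta> \<Lambda> (Y t) k) (at t)"
proof -
  let ?I = "\<lambda>t. integral {0..t} (\<lambda>s. exp (\<Lambda> * s) * picard_rhs \<beta> \<Lambda> (Y s) k)"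
  have "(?I has_real_derivative exp (\<Lambda> * t) * picard_rhs \<beta> \<Lambda> (Y t) k) (at t)"
    using continuous_on_picard_rhs[OF assms(1)] assms(2)
    by (intro integral_0_has_real_derivative_at continuous_intros) auto
  then have "((\<lambda>s. exp (- \<Lambda> * s) * (w k + ?I s)) has_real_derivative
      (- \<Lambda>) * exp (- \<Lambda> * t) * (w k + ?I t) + exp (- \<Lambda> * t) * (exp (\<Lambda> * t) * picard_rhs \<beta> \<Lambda> (Y t) k)) (at t)"
    by (auto intro!: derivative_eq_intros)
  moreover have "(- \<Lambda>) * exp (- \<Lambda> * t) * (w k + ?I t) + exp (- \<Lambda> * t) * (exp (\<Lambda> * t) * picard_rhs \<beta> \<Lambda> (Y t) k)
      = - \<Lambda> * picard_step \<beta> \<Lambda> w Y t k + picard_rhs \<beta> \<Lambda> (Y t) k"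
    unfolding picard_step_def by (simp add: exp_minus field_simps)
  ultimately show ?thesis unfolding picard_step_def by (rule DERIV_cong)
qed

lemma continuous_on_picard_step:
  assumes "strip_path \<delta> Y"
  shows "continuous_on {0..} (\<lambda>t. picard_step \<beta> \<Lambda> w Y t k)"
  unfolding picard_step_def
  using continuous_on_picard_rhs[OF assms]
  by (intro continuous_intros continuous_on_integral_0) auto

lemma strip_path_picard_step:
  assumes Y: "strip_path \<delta> Y" and w: "range w \<subseteq> {\<delta>..1}"
  shows "strip_path \<delta> (picard_step \<beta> \<Lambda> w Y)"
proof -
  let ?Z = "picard_step \<beta> \<Lambda> w Y"
  have rhs: "\<Lambda> * \<delta> \<le> picard_rhs \<beta> \<Lambda> (Y x) k \<and> picard_rhs \<beta> \<Lambda> (Y x) k \<le> \<Lambda>" if "0 \<le> x" for x k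
    using Y that unfolding strip_path_def by (intro picard_rhs_bounds) auto
  have cont: "continuous_on {0..t} (\<lambda>t. ?Z t k)" for t k
    using continuous_on_picard_step[OF Y] by (rule continuous_on_subset) auto
  have "\<delta> \<le> ?Z t k \<and> ?Z t k \<le> 1" if t: "0 \<le> t" for t k
  proof
    show "(\<lambda>_. \<delta>) t \<le> ?Z t k"
    proof (rule le_of_DERIV_plus_linear_le[where \<Lambda> = \<Lambda>, OF t _ cont])
      fix x assume "0 < x" "x < t"
      then show "\<exists>df dg. ((\<lambda>_. \<delta>) has_real_derivative df) (at x) \<and>
          ((\<lambda>t. ?Z t k) has_real_derivative dg) (at x)
          \<and> df + \<Lambda> * \<delta> \<le> dg + \<Lambda> * ?Z x k"
        using picard_step_has_real_derivative[OF Y, of x] rhs[of x k]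
        by (intro exI[of _ 0] exI[of _ "- \<Lambda> * ?Z x k + picard_rhs \<beta> \<Lambda> (Y x) k"]) auto
    qed (use w in \<open>auto simp: picard_step_0 image_subset_iff\<close>)
    show "?Z t k \<le> (\<lambda>_. 1) t"
    proof (rule le_of_DERIV_plus_linear_le[where \<Lambda> = \<Lambda>, OF t cont])
      fix x assume "0 < x" "x < t"
      then show "\<exists>df dg. ((\<lambda>t. ?Z t k) has_real_derivative df) (at x) \<and>
          ((\<lambda>_. 1) has_real_derivative dg) (at x)
          \<and> df + \<Lambda> * ?Z x k \<le> dg + \<Lambda> * 1"
        using picard_step_has_real_derivative[OF Y, of x] rhs[of x k]
        by (intro exI[of _ "- \<Lambda> * ?Z x k + picard_rhs \<beta> \<Lambda> (Y x) k"] exI[of _ 0]) auto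
    qed (use w in \<open>auto simp: picard_step_0 image_subset_iff\<close>)
  qed
  then show ?thesis
    unfolding strip_path_def using continuous_on_picard_step[OF Y] by blast
qed

lemma picard_step_mono:
  assumes Y: "strip_path \<delta> Y" "strip_path \<delta> Y'" and le: "\<And>s k. 0 \<le> s \<Longrightarrow> Y s k \<le> Y' s k"
    and t: "0 \<le> t"
  shows "picard_step \<beta> \<Lambda> w Y t k \<le> picard_step \<beta> \<Lambda> w Y' t k"
proof (rule le_of_DERIV_plus_linear_le[where \<Lambda> = \<Lambda>, OF t])
  show "continuous_on {0..t} (\<lambda>t. picard_step \<beta> \<Lambda> w Y t k)"
    using continuous_on_picard_step[OF Y(1)] by (rule continuous_on_subset) auto
  show "continuous_on {0..t} (\<lambda>t. picard_step \<beta> \<Lambda> w Y' t k)"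
    using continuous_on_picard_step[OF Y(2)] by (rule continuous_on_subset) auto
  fix x assume x: "0 < x" "x < t"
  have "picard_rhs \<beta> \<Lambda> (Y x) k \<le> picard_rhs \<beta> \<Lambda> (Y' x) k"
    using Y(1) le x unfolding strip_path_def by (intro picard_rhs_mono) auto
  then show "\<exists>df dg. ((\<lambda>t. picard_step \<beta> \<Lambda> w Y t k) has_real_derivative df) (at x) \<and>
      ((\<lambda>t. picard_step \<beta> \<Lambda> w Y' t k) has_real_derivative dg) (at x) \<and>
      df + \<Lambda> * picard_step \<beta> \<Lambda> w Y x k \<le> dg + \<Lambda> * picard_step \<beta> \<Lambda> w Y' x k"
    using picard_step_has_real_derivative[OF Y(1) x(1)] picard_step_has_real_derivative[OF Y(2) x(1)]
    by (intro exI conjI) auto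
qed (simp add: picard_step_0)

lemma picard_step_Lipschitz:
  assumes Y: "strip_path \<delta> Y" and w: "range w \<subseteq> {\<delta>..1}" and st: "0 \<le> s" "0 \<le> t"
  shows "\<bar>picard_step \<beta> \<Lambda> w Y t k - picard_step \<beta> \<Lambda> w Y s k\<bar> \<le> \<Lambda> * \<bar>t - s\<bar>"
proof -
  let ?Z = "picard_step \<beta> \<Lambda> w Y"
  have "\<bar>?Z b k - ?Z a k\<bar> \<le> \<Lambda> * (b - a)" if ab: "0 \<le> a" "a \<le> b" for a b
  proof (rule abs_diff_le_of_DERIV_bound[OF ab(2)])
    show "continuous_on {a..b} (\<lambda>t. ?Z t k)"
      using continuous_on_picard_step[OF Y] by (rule continuous_on_subset) (use ab in auto)
    fix x assume x: "a < x" "x < b"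
    have Z: "\<delta> \<le> ?Z x k \<and> ?Z x k \<le> 1"
      using strip_path_picard_step[OF Y w] x ab unfolding strip_path_def by auto
    have "\<Lambda> * \<delta> \<le> picard_rhs \<beta> \<Lambda> (Y x) k \<and> picard_rhs \<beta> \<Lambda> (Y x) k \<le> \<Lambda>"
      using Y x ab unfolding strip_path_def by (intro picard_rhs_bounds) auto
    moreover have "\<Lambda> * \<delta> \<le> \<Lambda> * ?Z x k" "\<Lambda> * ?Z x k \<le> \<Lambda>" "0 \<le> \<Lambda> * \<delta>"
      using Z \<delta> picard_weight_nonneg by (auto intro: mult_left_mono mult_left_le)
    ultimately have "\<bar>- \<Lambda> * ?Z x k + picard_rhs \<beta> \<Lambda> (Y x) k\<bar> \<le> \<Lambda>"
      by (simp add: abs_le_iff)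
    then show "\<exists>d. ((\<lambda>t. ?Z t k) has_real_derivative d) (at x) \<and> \<bar>d\<bar> \<le> \<Lambda>"
      using picard_step_has_real_derivative[OF Y, of x] x ab by auto
  qed
  from this[of s t] this[of t s] st show ?thesis
    by (cases "s \<le> t") (auto simp: abs_minus_commute)
qed

lemma strip_path_picard_iterate:
  assumes w: "range w \<subseteq> {\<delta>..1}"
  shows "strip_path \<delta> (picard_iterate \<beta> \<Lambda> w \<delta> n)"
proof (induction n)
  case 0
  show ?case unfolding picard_iterate_def strip_path_def using \<delta> by auto
next
  case (Suc n)
  show ?case unfolding picard_iterate_Suc using strip_path_picard_step[OF Suc w] .
qed

lemma picard_iterate_mono:
  assumes w: "range w \<subseteq> {\<delta>..1}" and t: "0 \<le> t"
  shows "picard_iterate \<beta> \<Lambda> w \<delta> n t k \<le> picard_iterate \<beta> \<Lambda> w \<delta> (Suc n) t k"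
  using t
proof (induction n arbitrary: t k)
  case 0
  show ?case
    using strip_path_picard_iterate[OF w, of 1] 0 unfolding strip_path_def by (simp add: picard_iterate_def)
next
  case (Suc n)
  show ?case
    unfolding picard_iterate_Suc[of _ _ _ _ "Suc n"] unfolding picard_iterate_Suc[of _ _ _ _ n]
    using Suc strip_path_picard_iterate[OF w]
    by (intro picard_step_mono) (auto simp flip: picard_iterate_Suc)
qed

lemma picard_iterate_Lipschitz:
  assumes w: "range w \<subseteq> {\<delta>..1}" and st: "0 \<le> s" "0 \<le> t"
  shows "\<bar>picard_iterate \<beta> \<Lambda> w \<delta> n t k - picard_iterate \<beta> \<Lambda> w \<delta> n s k\<bar> \<le> \<Lambda> * \<bar>t - s\<bar>"
proof (cases n)
  case 0
  then show ?thesis unfolding picard_iterate_def using picard_weight_nonneg by simp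
next
  case (Suc m)
  then show ?thesis
    using picard_step_Lipschitz[OF strip_path_picard_iterate[OF w, of m] w st, of k]
    by (simp add: picard_iterate_Suc)
qed

lemma picard_limit_has_real_derivative:
  assumes w: "range w \<subseteq> {\<delta>..1}"
    and conv: "\<And>k t. 0 \<le> t \<Longrightarrow> (\<lambda>n. picard_iterate \<beta> \<Lambda> w \<delta> n t k) \<longlonglongrightarrow> u t k"
    and t: "0 < t"
  shows "((\<lambda>s. u s k) has_real_derivative dlap (\<lambda>j. Gb \<beta> (u t j)) k) (at t)"
proof -
  define K where "K = Gb_Lipschitz_const \<beta> \<delta>"
  define Y where "Y = picard_iterate \<beta> \<Lambda> w \<delta>"
  note Y = strip_path_picard_iterate[OF w, folded Y_def] picard_iterate_Suc[of \<beta> \<Lambda> w \<delta>, folded Y_def]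
  note Lip = picard_iterate_Lipschitz[OF w, folded Y_def]
  note conv = conv[folded Y_def]
  have "((\<lambda>s. u s k) has_real_derivative - \<Lambda> * u t k + picard_rhs \<beta> \<Lambda> (u t) k) (at t)"
  proof (rule has_real_derivative_of_Lipschitz_DERIV_seq[where f = "\<lambda>n s. Y (Suc n) s k"
        and D = "\<lambda>n s. - \<Lambda> * Y (Suc n) s k + picard_rhs \<beta> \<Lambda> (Y n s) k"
        and M = "\<Lambda> * \<Lambda> + (4 * K + \<Lambda>) * \<Lambda>", OF t])
    fix n x assume x: "\<bar>x - t\<bar> < t"
    then have x0: "0 \<le> x" by auto
    show "((\<lambda>s. Y (Suc n) s k) has_real_derivative - \<Lambda> * Y (Suc n) x k + picard_rhs \<beta> \<Lambda> (Y n x) k) (at x)"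
      using x unfolding Y(2) by (intro picard_step_has_real_derivative Y(1)) auto
    have "\<bar>picard_rhs \<beta> \<Lambda> (Y n x) k - picard_rhs \<beta> \<Lambda> (Y n t) k\<bar> \<le> (4 * K + \<Lambda>) * (\<Lambda> * \<bar>x - t\<bar>)"
      unfolding K_def using Y(1)[of n] Lip[OF _ x0, of t n] x0 t
      by (intro picard_rhs_Lipschitz) (auto simp: strip_path_def)
    moreover have "\<bar>\<Lambda> * (Y (Suc n) x k - Y (Suc n) t k)\<bar> \<le> \<Lambda> * (\<Lambda> * \<bar>x - t\<bar>)"
      using Lip[OF _ x0, of t "Suc n" k] t picard_weight_nonneg by (simp add: abs_mult mult_left_mono)
    moreover have "- \<Lambda> * Y (Suc n) x k + picard_rhs \<beta> \<Lambda> (Y n x) k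
        - (- \<Lambda> * Y (Suc n) t k + picard_rhs \<beta> \<Lambda> (Y n t) k)
        = (picard_rhs \<beta> \<Lambda> (Y n x) k - picard_rhs \<beta> \<Lambda> (Y n t) k) - \<Lambda> * (Y (Suc n) x k - Y (Suc n) t k)"
      by (simp add: algebra_simps)
    moreover have "(4 * K + \<Lambda>) * (\<Lambda> * \<bar>x - t\<bar>) + \<Lambda> * (\<Lambda> * \<bar>x - t\<bar>) = (\<Lambda> * \<Lambda> + (4 * K + \<Lambda>) * \<Lambda>) * \<bar>x - t\<bar>"
      by (simp add: algebra_simps)
    ultimately show "\<bar>- \<Lambda> * Y (Suc n) x k + picard_rhs \<beta> \<Lambda> (Y n x) k
        - (- \<Lambda> * Y (Suc n) t k + picard_rhs \<beta> \<Lambda> (Y n t) k)\<bar> \<le> (\<Lambda> * \<Lambda> + (4 * K + \<Lambda>) * \<Lambda>) * \<bar>x - t\<bar>"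
      by (smt (verit) abs_triangle_ineq4)
  next
    fix x assume "\<bar>x - t\<bar> < t"
    then show "(\<lambda>n. Y (Suc n) x k) \<longlonglongrightarrow> u x k" using LIMSEQ_Suc[OF conv] by auto
  next
    have "\<delta> \<le> u t j" for j
      using conv[of t j] Y(1) t unfolding strip_path_def by (intro LIMSEQ_le_const) auto
    then have "u t j \<in> {0<..}" for j using \<delta> by (simp add: less_le_trans)
    then have cont: "isCont (Gb \<beta>) (u t j)" for j
      using continuous_on_Gb[OF \<beta>(1)] by (simp add: continuous_on_eq_continuous_at)
    have "(\<lambda>n. Gb \<beta> (Y n t j)) \<longlonglongrightarrow> Gb \<beta> (u t j)" for j
      using isCont_tendsto_compose[OF cont conv[of t j]] t by simp
    then show "(\<lambda>n. - \<Lambda> * Y (Suc n) t k + picard_rhs \<beta> \<Lambda> (Y n t) k) \<longlonglongrightarrow> - \<Lambda> * u t k + picard_rhs \<beta> \<Lambda> (u t) k"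
      unfolding picard_rhs_def dlap_def using conv[of t] LIMSEQ_Suc[OF conv[of t k]] t
      by (intro tendsto_intros) auto
  qed
  then show ?thesis unfolding picard_rhs_def by simp
qed

end

lemma strip_solution_exists:
  assumes \<beta>: "\<beta> \<noteq> 0" "\<beta> < 1" and \<delta>: "0 < \<delta>" "\<delta> \<le> 1" and w: "range w \<subseteq> {\<delta>..1}"
  shows "\<exists>U. strip_solution \<beta> \<delta> w U"
proof -
  define \<Lambda> where "\<Lambda> = 2 * Gb_Lipschitz_const \<beta> \<delta>"
  have \<Lambda>: "2 * Gb_Lipschitz_const \<beta> \<delta> \<le> \<Lambda>" unfolding \<Lambda>_def by simp
  define Y where "Y = picard_iterate \<beta> \<Lambda> w \<delta>"
  note strip = strip_path_picard_iterate[OF \<beta> \<delta> \<Lambda> w, folded Y_def]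
  define u where "u t k = (SUP n. Y n t k)" for t k
  have conv: "(\<lambda>n. Y n t k) \<longlonglongrightarrow> u t k" if "0 \<le> t" for t k
    unfolding u_def
  proof (rule LIMSEQ_incseq_SUP)
    show "bdd_above (range (\<lambda>n. Y n t k))"
      using strip that unfolding strip_path_def by (intro bdd_aboveI[of _ 1]) auto
    show "incseq (\<lambda>n. Y n t k)"
      using picard_iterate_mono[OF \<beta> \<delta> \<Lambda> w that] unfolding Y_def by (intro incseq_SucI) auto
  qed
  have "\<Lambda>-lipschitz_on {0..} (\<lambda>t. u t k)" for k
  proof -
    have "\<bar>u t k - u s k\<bar> \<le> \<Lambda> * \<bar>t - s\<bar>" if "0 \<le> s" "0 \<le> t" for s t
    proof (rule LIMSEQ_le_const2[where X = "\<lambda>n. \<bar>Y n t k - Y n s k\<bar>"])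
      show "(\<lambda>n. \<bar>Y n t k - Y n s k\<bar>) \<longlonglongrightarrow> \<bar>u t k - u s k\<bar>"
        using conv[OF that(1)] conv[OF that(2)] by (intro tendsto_intros)
    qed (use picard_iterate_Lipschitz[OF \<beta> \<delta> \<Lambda> w that] Y_def in auto)
    then show ?thesis
      unfolding lipschitz_on_def dist_real_def using picard_weight_nonneg[OF \<beta> \<delta> \<Lambda>] by auto
  qed
  then have "continuous_on {0..} (\<lambda>t. u t k)" for k by (rule lipschitz_on_continuous_on)
  moreover have "\<delta> \<le> u t k \<and> u t k \<le> 1" if "0 \<le> t" for t k
  proof
    show "\<delta> \<le> u t k"
      by (rule LIMSEQ_le_const[OF conv[OF that]]) (use strip that in \<open>auto simp: strip_path_def\<close>)
    show "u t k \<le> 1"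
      by (rule LIMSEQ_le_const2[OF conv[OF that]]) (use strip that in \<open>auto simp: strip_path_def\<close>)
  qed
  ultimately have "strip_path \<delta> u" unfolding strip_path_def by blast
  moreover have "u 0 = w"
  proof
    fix k
    have "(\<lambda>n. Y (Suc n) 0 k) \<longlonglongrightarrow> u 0 k" using LIMSEQ_Suc[OF conv[of 0 k]] by simp
    then show "u 0 k = w k" unfolding Y_def picard_iterate_Suc picard_step_0 by (simp add: LIMSEQ_const_iff)
  qed
  moreover have "((\<lambda>s. u s k) has_real_derivative dlap (\<lambda>j. Gb \<beta> (u t j)) k) (at t)" if "0 < t" for k t
    using picard_limit_has_real_derivative[OF \<beta> \<delta> \<Lambda> w conv[unfolded Y_def] that] .
  ultimately show ?thesis unfolding strip_solution_def by blast
qed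

section \<open>A self-similar subsolution\<close>

definition scaling_exp :: "real \<Rightarrow> real" where "scaling_exp \<beta> = 1 / (1 - \<beta>)"

text \<open>The profile at distance \<open>n \<ge> 1\<close> from the last created site is \<open>a\<^sub>n s\<^sup>\<gamma>\<close> with
  \<open>a\<^sub>n = profile_coeff \<beta> L n\<close>: geometric with ratio \<open>profile_ratio\<close> for \<open>\<beta> > 0\<close>, and for
  \<open>\<beta> < 0\<close> defined by \<open>a\<^sub>n\<^sup>\<beta> = profile_power \<beta> L n\<close>, a quadratic in \<open>n\<close> with second
  difference \<open>-2\<close>.\<close>

definition profile_ratio :: "real \<Rightarrow> real" where
  "profile_ratio \<beta> = min (1 / (2 * scaling_exp \<beta>)) ((1/4) powr (1/\<beta>))"

definition profile_power :: "real \<Rightarrow> nat \<Rightarrow> nat \<Rightarrow> real" where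
  "profile_power \<beta> L n = 4 powr (-\<beta>) + real n * (2 * real L + 2 - real n)"

definition profile_power_max :: "real \<Rightarrow> nat \<Rightarrow> real" where
  "profile_power_max \<beta> L = 4 powr (-\<beta>) + (real L + 1)^2"

definition profile_coeff :: "real \<Rightarrow> nat \<Rightarrow> nat \<Rightarrow> real" where
  "profile_coeff \<beta> L n = (if 0 < \<beta> then profile_ratio \<beta> ^ n / 4 else profile_power \<beta> L n powr (1/\<beta>))"

definition profile_coeff_min :: "real \<Rightarrow> nat \<Rightarrow> real" where
  "profile_coeff_min \<beta> L = (if 0 < \<beta> then profile_ratio \<beta> ^ L / 4 else profile_power_max \<beta> L powr (1/\<beta>))"

definition created_rate :: "real \<Rightarrow> nat \<Rightarrow> real" where
  "created_rate \<beta> L = 2 + 2 * profile_power_max \<beta> L / scaling_exp \<beta>"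

definition barrier_horizon :: "real \<Rightarrow> nat \<Rightarrow> real" where
  "barrier_horizon \<beta> L =
     min 1 (min (1 / (8 * created_rate \<beta> L)) ((1 / (8 * created_rate \<beta> L)) powr (1 / scaling_exp \<beta>)))"

lemma scaling_exp_pos: "\<beta> < 1 \<Longrightarrow> 0 < scaling_exp \<beta>" unfolding scaling_exp_def by simp

lemma scaling_exp_gt_1: "0 < \<beta> \<Longrightarrow> \<beta> < 1 \<Longrightarrow> 1 < scaling_exp \<beta>"
  unfolding scaling_exp_def by (simp add: field_simps)

lemma scaling_exp_lt_1: "\<beta> < 0 \<Longrightarrow> scaling_exp \<beta> < 1" unfolding scaling_exp_def by (simp add: field_simps)

lemma scaling_exp_minus_1: "\<beta> < 1 \<Longrightarrow> scaling_exp \<beta> - 1 = scaling_exp \<beta> * \<beta>"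
  unfolding scaling_exp_def by (simp add: field_simps)

lemma profile_power_ge: "n \<le> 2 * L + 2 \<Longrightarrow> 4 powr (-\<beta>) \<le> profile_power \<beta> L n"
  unfolding profile_power_def by (simp add: of_nat_le_iff[symmetric])

lemma profile_power_le_max: "n \<le> L + 1 \<Longrightarrow> profile_power \<beta> L n \<le> profile_power_max \<beta> L"
proof -
  have eq: "(real L + 1)^2 - real n * (2 * real L + 2 - real n) = (real L + 1 - real n)^2"
    by (simp add: power2_eq_square algebra_simps)
  have "0 \<le> (real L + 1 - real n)^2" by simp
  then have "real n * (2 * real L + 2 - real n) \<le> (real L + 1)^2" using eq by linarith
  then show ?thesis unfolding profile_power_def profile_power_max_def by simp
qed

lemma profile_power_pos: "n \<le> 2 * L + 2 \<Longrightarrow> 0 < profile_power \<beta> L n"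
  using profile_power_ge[of n L \<beta>] powr_gt_zero[of 4 "-\<beta>"] by linarith

lemma profile_power_second_diff:
  "1 \<le> d \<Longrightarrow> 2 * profile_power \<beta> L d - profile_power \<beta> L (d - 1) - profile_power \<beta> L (d + 1) = 2"
  unfolding profile_power_def by (simp add: of_nat_diff algebra_simps)

lemma profile_power_max_pos: "0 < profile_power_max \<beta> L" 
  unfolding profile_power_max_def by (simp add: add_pos_nonneg)

lemma profile_power_max_ge: "4 powr (-\<beta>) \<le> profile_power_max \<beta> L" unfolding profile_power_max_def by simp

lemma four_powr_neg_powr_inverse: "\<beta> \<noteq> 0 \<Longrightarrow> ((4::real) powr (-\<beta>)) powr (1/\<beta>) = 1/4"
proof -
  assume b: "\<beta> \<noteq> 0"
  have "((4::real) powr (-\<beta>)) powr (1/\<beta>) = 4 powr (-\<beta> * (1/\<beta>))" by (rule powr_powr)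
  also have "-\<beta> * (1/\<beta>) = - 1" using b by simp
  also have "(4::real) powr (- 1) = 1/4" by (simp add: powr_minus_divide)
  finally show ?thesis .
qed

lemma profile_ratio_pos: "0 < \<beta> \<Longrightarrow> \<beta> < 1 \<Longrightarrow> 0 < profile_ratio \<beta>"
  unfolding profile_ratio_def using scaling_exp_pos[of \<beta>] by simp

lemma profile_ratio_le_1: "0 < \<beta> \<Longrightarrow> profile_ratio \<beta> \<le> 1"
proof -
  assume b: "0 < \<beta>"
  have "(1/4::real) powr (1/\<beta>) \<le> 1" by (rule powr_le1) (use b in auto)
  then show ?thesis unfolding profile_ratio_def by linarith
qed

lemma profile_ratio_powr_le: "0 < \<beta> \<Longrightarrow> \<beta> < 1 \<Longrightarrow> profile_ratio \<beta> powr \<beta> \<le> 1/4"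
proof -
  assume b: "0 < \<beta>" "\<beta> < 1"
  have "profile_ratio \<beta> \<le> (1/4) powr (1/\<beta>)" unfolding profile_ratio_def by simp
  then have "profile_ratio \<beta> powr \<beta> \<le> ((1/4) powr (1/\<beta>)) powr \<beta>"
    using profile_ratio_pos[OF b] b by (intro powr_mono2) auto
  also have "\<dots> = 1/4" using b by (simp add: powr_powr)
  finally show ?thesis .
qed

lemma profile_ratio_scaling_exp_le: "\<beta> < 1 \<Longrightarrow> profile_ratio \<beta> * scaling_exp \<beta> \<le> 1/2"
proof -
  assume b: "\<beta> < 1"
  have "profile_ratio \<beta> \<le> 1 / (2 * scaling_exp \<beta>)" unfolding profile_ratio_def by simp
  then have "profile_ratio \<beta> * scaling_exp \<beta> \<le> 1 / (2 * scaling_exp \<beta>) * scaling_exp \<beta>"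
    using scaling_exp_pos[OF b] by (intro mult_right_mono) auto
  also have "\<dots> = 1/2" using scaling_exp_pos[OF b] by simp
  finally show ?thesis .
qed

lemma profile_coeff_ge_min:
  assumes b: "\<beta> < 0 \<or> (0 < \<beta> \<and> \<beta> < 1)" and d: "1 \<le> d" "d \<le> L"
  shows "profile_coeff_min \<beta> L \<le> profile_coeff \<beta> L d"
proof (cases "0 < \<beta>")
  case True
  have "0 \<le> profile_ratio \<beta>" "profile_ratio \<beta> \<le> 1"
    using True b profile_ratio_pos[of \<beta>] profile_ratio_le_1[of \<beta>] by auto
  then have "profile_ratio \<beta> ^ L \<le> profile_ratio \<beta> ^ d"
    using d by (intro power_decreasing) auto
  then show ?thesis unfolding profile_coeff_min_def profile_coeff_def using True by simp
next
  case False
  then have "profile_power_max \<beta> L powr (1/\<beta>) \<le> profile_power \<beta> L d powr (1/\<beta>)"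
    using b profile_power_le_max[of d L \<beta>] profile_power_pos[of d L \<beta>] d by (intro powr_mono2') auto
  then show ?thesis unfolding profile_coeff_min_def profile_coeff_def using False by simp
qed

lemma profile_coeff_le_quarter:
  assumes b: "\<beta> < 0 \<or> (0 < \<beta> \<and> \<beta> < 1)" and d: "d \<le> L"
  shows "profile_coeff \<beta> L d \<le> 1/4"
proof (cases "0 < \<beta>")
  case True
  have "0 \<le> profile_ratio \<beta>" "profile_ratio \<beta> \<le> 1"
    using True b profile_ratio_pos[of \<beta>] profile_ratio_le_1[of \<beta>] by auto
  then have "profile_ratio \<beta> ^ d \<le> 1" by (intro power_le_one) auto
  then show ?thesis unfolding profile_coeff_def using True by simp
next
  case False
  then have "profile_power \<beta> L d powr (1/\<beta>) \<le> (4 powr (-\<beta>)) powr (1/\<beta>)"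
    using b profile_power_ge[of d L \<beta>] d by (intro powr_mono2') auto
  then show ?thesis unfolding profile_coeff_def using False four_powr_neg_powr_inverse[of \<beta>] b by simp
qed

lemma profile_coeff_min_pos: "\<beta> < 0 \<or> (0 < \<beta> \<and> \<beta> < 1) \<Longrightarrow> 0 < profile_coeff_min \<beta> L"
  unfolding profile_coeff_min_def using profile_ratio_pos[of \<beta>] profile_power_max_pos[of \<beta> L] by auto

lemma profile_coeff_min_le: "\<beta> < 0 \<or> (0 < \<beta> \<and> \<beta> < 1) \<Longrightarrow> profile_coeff_min \<beta> L \<le> 1/4"
proof -
  assume b: "\<beta> < 0 \<or> (0 < \<beta> \<and> \<beta> < 1)"
  show ?thesis
  proof (cases "0 < \<beta>")
    case True
    have tp: "0 \<le> profile_ratio \<beta>" "profile_ratio \<beta> \<le> 1"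
      using True b profile_ratio_pos[of \<beta>] profile_ratio_le_1[of \<beta>] by auto
    have "profile_ratio \<beta> ^ L \<le> 1" using tp by (intro power_le_one) auto
    then show ?thesis unfolding profile_coeff_min_def using True by simp
  next
    case False
    then have bn: "\<beta> < 0" using b by auto
    have "profile_power_max \<beta> L powr (1/\<beta>) \<le> (4 powr (-\<beta>)) powr (1/\<beta>)"
      using bn profile_power_max_ge[of \<beta> L] by (intro powr_mono2') auto
    then show ?thesis unfolding profile_coeff_min_def using False four_powr_neg_powr_inverse[of \<beta>] bn by simp
  qed
qed

lemma profile_coeff_pos: "\<beta> < 0 \<or> (0 < \<beta> \<and> \<beta> < 1) \<Longrightarrow> d \<le> 2 * L + 2 \<Longrightarrow> 0 < profile_coeff \<beta> L d"
  unfolding profile_coeff_def using profile_ratio_pos[of \<beta>] profile_power_pos[of d L \<beta>] by auto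

lemma profile_coeff_powr_of_neg: "\<beta> < 0 \<Longrightarrow> d \<le> 2 * L + 2 \<Longrightarrow> profile_coeff \<beta> L d powr \<beta> = profile_power \<beta> L d"
  unfolding profile_coeff_def using profile_power_pos[of d L \<beta>] by (simp add: powr_powr)

lemma profile_coeff_0: "\<beta> < 0 \<or> (0 < \<beta> \<and> \<beta> < 1) \<Longrightarrow> profile_coeff \<beta> L 0 = 1/4"
  unfolding profile_coeff_def profile_power_def using four_powr_neg_powr_inverse[of \<beta>] by auto

lemma profile_coeff_step_pos:
  assumes b: "0 < \<beta>" "\<beta> < 1" and d: "1 \<le> d"
  shows "profile_coeff \<beta> L d * scaling_exp \<beta> + 2 * profile_coeff \<beta> L d powr \<beta>
      \<le> profile_coeff \<beta> L (d - 1) powr \<beta>"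
proof -
  define a where "a = profile_coeff \<beta> L (d - 1)"
  have a: "a = profile_ratio \<beta> ^ (d - 1) / 4" unfolding a_def profile_coeff_def using b by simp
  have ad: "profile_coeff \<beta> L d = profile_ratio \<beta> * a" unfolding a profile_coeff_def using b d
    by (simp add: power_eq_if[of _ d])
  have a0: "0 < a" unfolding a using profile_ratio_pos[OF b] by simp
  have "profile_ratio \<beta> ^ (d - 1) \<le> 1"
    using profile_ratio_pos[OF b] profile_ratio_le_1[OF b(1)] by (intro power_le_one) auto
  then have a1: "a \<le> 1" unfolding a by simp
  have "a \<le> a powr \<beta>"
  proof -
    have "a powr 1 \<le> a powr \<beta>" using a0 a1 b by (intro powr_mono') auto
    then show ?thesis using a0 by simp
  qed
  have t1: "profile_ratio \<beta> * a * scaling_exp \<beta> \<le> a / 2"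
    using profile_ratio_scaling_exp_le[OF b(2)] a0 by (simp add: mult.commute mult.left_commute)
  have t2: "(profile_ratio \<beta> * a) powr \<beta> = profile_ratio \<beta> powr \<beta> * a powr \<beta>"
    using a0 profile_ratio_pos[OF b] by (simp add: powr_mult)
  have "profile_ratio \<beta> powr \<beta> * a powr \<beta> \<le> 1/4 * a powr \<beta>"
    using profile_ratio_powr_le[OF b] by (intro mult_right_mono) auto
  then show ?thesis unfolding ad t2 using t1 \<open>a \<le> a powr \<beta>\<close> unfolding a_def by linarith
qed

lemma profile_coeff_step_neg:
  assumes b: "\<beta> < 0" and d: "1 \<le> d" "d \<le> L"
  shows "profile_coeff \<beta> L d * scaling_exp \<beta>
      \<le> 2 * profile_power \<beta> L d - profile_power \<beta> L (d - 1) - profile_power \<beta> L (d + 1)"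
proof -
  have "profile_coeff \<beta> L d \<le> 1/4" using profile_coeff_le_quarter[of \<beta> d L] b d by auto
  moreover have "0 < profile_coeff \<beta> L d" using profile_coeff_pos[of \<beta> d L] b d by auto
  moreover have "scaling_exp \<beta> < 1" "0 < scaling_exp \<beta>"
    using scaling_exp_lt_1[OF b] scaling_exp_pos[of \<beta>] b by auto
  ultimately have "profile_coeff \<beta> L d * scaling_exp \<beta> \<le> 1/4 * 1" by (intro mult_mono) auto
  then have "profile_coeff \<beta> L d * scaling_exp \<beta> \<le> 2" by simp
  then show ?thesis using profile_power_second_diff[OF d(1)] by simp
qed

lemma created_rate_bounds:
  "\<beta> < 1 \<Longrightarrow> 2 \<le> created_rate \<beta> L \<and> 2 * profile_power_max \<beta> L \<le> created_rate \<beta> L * scaling_exp \<beta>"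
proof -
  assume b: "\<beta> < 1"
  have g: "0 < scaling_exp \<beta>" using scaling_exp_pos[OF b] .
  have "0 \<le> 2 * profile_power_max \<beta> L / scaling_exp \<beta>" using profile_power_max_pos[of \<beta> L] g by simp
  moreover have "created_rate \<beta> L * scaling_exp \<beta> = 2 * scaling_exp \<beta> + 2 * profile_power_max \<beta> L"
    unfolding created_rate_def using g by (simp add: field_simps)
  ultimately show ?thesis unfolding created_rate_def using g by simp
qed

lemma barrier_horizon_bounds:
  assumes b: "\<beta> < 1" 
  shows "0 < barrier_horizon \<beta> L" "barrier_horizon \<beta> L \<le> 1"
    and "\<And>s. 0 \<le> s \<Longrightarrow> s \<le> barrier_horizon \<beta> L \<Longrightarrow> created_rate \<beta> L * (s + s powr scaling_exp \<beta>) \<le> 1/4"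
proof -
  have B2: "2 \<le> created_rate \<beta> L" using created_rate_bounds[OF b] by simp
  have g: "0 < scaling_exp \<beta>" using scaling_exp_pos[OF b] .
  define c where "c = 1 / (8 * created_rate \<beta> L)"
  have c0: "0 < c" unfolding c_def using B2 by simp
  show "0 < barrier_horizon \<beta> L" unfolding barrier_horizon_def c_def[symmetric] using c0 by simp
  show "barrier_horizon \<beta> L \<le> 1" unfolding barrier_horizon_def by simp
  fix s assume s: "0 \<le> s" "s \<le> barrier_horizon \<beta> L"
  have s1: "s \<le> c" using s unfolding barrier_horizon_def c_def by simp
  have "s \<le> c powr (1 / scaling_exp \<beta>)" using s unfolding barrier_horizon_def c_def by simp
  then have "s powr scaling_exp \<beta> \<le> (c powr (1 / scaling_exp \<beta>)) powr scaling_exp \<beta>"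
    using s g by (intro powr_mono2) auto
  also have "\<dots> = c" using g c0 by (simp add: powr_powr)
  finally have s2: "s powr scaling_exp \<beta> \<le> c" .
  have "created_rate \<beta> L * (s + s powr scaling_exp \<beta>) \<le> created_rate \<beta> L * (c + c)"
    using s1 s2 B2 by (intro mult_left_mono) auto
  also have "\<dots> = 1/4" unfolding c_def using B2 by simp
  finally show "created_rate \<beta> L * (s + s powr scaling_exp \<beta>) \<le> 1/4" .
qed

definition gap_profile :: "nat \<Rightarrow> (int \<Rightarrow> nat) \<Rightarrow> bool" where
  "gap_profile L g \<longleftrightarrow> (\<forall>k. g k \<le> L) \<and> (\<forall>k. g k \<noteq> 0 \<longrightarrow> g (k - 1) = g k - 1) \<and>
     (\<forall>k. g (k + 1) = 0 \<or> g (k + 1) = g k + 1)"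

definition barrier :: "real \<Rightarrow> nat \<Rightarrow> (int \<Rightarrow> nat) \<Rightarrow> real \<Rightarrow> int \<Rightarrow> real" where
  "barrier \<beta> L g s k =
     (if g k = 0 then 1/2 - created_rate \<beta> L * (s + s powr scaling_exp \<beta>)
      else profile_coeff \<beta> L (g k) * s powr scaling_exp \<beta>)"

definition barrier_deriv :: "real \<Rightarrow> nat \<Rightarrow> (int \<Rightarrow> nat) \<Rightarrow> real \<Rightarrow> int \<Rightarrow> real" where
  "barrier_deriv \<beta> L g s k =
     (if g k = 0 then - created_rate \<beta> L * (1 + scaling_exp \<beta> * s powr (scaling_exp \<beta> - 1))
      else profile_coeff \<beta> L (g k) * (scaling_exp \<beta> * s powr (scaling_exp \<beta> - 1)))"

lemma barrier_has_real_derivative: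
  "0 < s \<Longrightarrow> ((\<lambda>s. barrier \<beta> L g s k) has_real_derivative barrier_deriv \<beta> L g s k) (at s)"
  unfolding barrier_def barrier_deriv_def
  by (cases "g k = 0") (auto intro!: derivative_eq_intros)

lemma continuous_on_barrier: "continuous_on {0<..} (\<lambda>s. barrier \<beta> L g s k)"
  by (rule DERIV_continuous_on[OF has_field_derivative_at_within[OF barrier_has_real_derivative]]) auto

context
  fixes \<beta> :: real and L :: nat and g :: "int \<Rightarrow> nat" and s :: real
  assumes b: "\<beta> < 0 \<or> (0 < \<beta> \<and> \<beta> < 1)" and g: "gap_profile L g"
    and s: "0 < s" "s \<le> barrier_horizon \<beta> L"
begin

lemma barrier_created_bounds: "g k = 0 \<Longrightarrow> 1/4 \<le> barrier \<beta> L g s k \<and> barrier \<beta> L g s k \<le> 1/2"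
  using barrier_horizon_bounds(3)[of \<beta> s L] created_rate_bounds[of \<beta> L] s b
  unfolding barrier_def by (auto intro!: mult_nonneg_nonneg)

lemma barrier_gap_bounds:
  assumes "g k \<noteq> 0"
  shows "profile_coeff_min \<beta> L * s powr scaling_exp \<beta> \<le> barrier \<beta> L g s k \<and> barrier \<beta> L g s k \<le> 1/4"
proof -
  have gL: "g k \<le> L" using g unfolding gap_profile_def by blast
  have sg: "0 < s powr scaling_exp \<beta>" "s powr scaling_exp \<beta> \<le> 1"
    using s barrier_horizon_bounds(2)[of \<beta> L] scaling_exp_pos[of \<beta>] b by (auto intro: powr_le1)
  have a: "profile_coeff_min \<beta> L \<le> profile_coeff \<beta> L (g k)" "profile_coeff \<beta> L (g k) \<le> 1/4"
    using profile_coeff_ge_min[OF b, of "g k" L] profile_coeff_le_quarter[OF b gL] assms gL by auto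
  have "profile_coeff_min \<beta> L * s powr scaling_exp \<beta> \<le> profile_coeff \<beta> L (g k) * s powr scaling_exp \<beta>"
    using a(1) sg by (intro mult_right_mono) auto
  moreover have "profile_coeff \<beta> L (g k) * s powr scaling_exp \<beta> \<le> 1/4 * 1"
    using a sg profile_coeff_min_pos[OF b, of L] by (intro mult_mono) auto
  ultimately show ?thesis unfolding barrier_def using assms by simp
qed

lemma barrier_ge: "profile_coeff_min \<beta> L * s powr scaling_exp \<beta> \<le> barrier \<beta> L g s k"
proof (cases "g k = 0")
  case True
  have "profile_coeff_min \<beta> L * s powr scaling_exp \<beta> \<le> 1/4 * 1"
    using profile_coeff_min_pos[OF b] profile_coeff_min_le[OF b] s barrier_horizon_bounds(2)[of \<beta> L]
      scaling_exp_pos[of \<beta>] b by (intro mult_mono powr_le1) auto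
  then show ?thesis using barrier_created_bounds[OF True] by simp
qed (use barrier_gap_bounds in blast)

lemma barrier_le_half: "barrier \<beta> L g s k \<le> 1/2"
proof (cases "g k = 0")
  case True
  then show ?thesis using barrier_created_bounds by simp
next
  case False
  then show ?thesis using barrier_gap_bounds[OF False] by simp
qed

lemma barrier_powr:
  assumes "g j \<noteq> 0"
  shows "barrier \<beta> L g s j powr \<beta> = profile_coeff \<beta> L (g j) powr \<beta> * s powr (scaling_exp \<beta> - 1)"
proof -
  have "g j \<le> L" using g unfolding gap_profile_def by blast
  then have "0 < profile_coeff \<beta> L (g j)" using profile_coeff_pos[OF b, of "g j" L] by simp
  moreover have "\<beta> < 1" using b by auto
  ultimately show ?thesis
    unfolding barrier_def using assms s scaling_exp_minus_1[of \<beta>] by (simp add: powr_mult powr_powr)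
qed

lemma barrier_powr_ge_of_pos:
  assumes pos: "0 < \<beta>"
  shows "profile_coeff \<beta> L (g j) powr \<beta> * s powr (scaling_exp \<beta> - 1) \<le> barrier \<beta> L g s j powr \<beta>"
proof (cases "g j = 0")
  case True
  have b1: "\<beta> < 1" using b pos by auto
  have "s powr (scaling_exp \<beta> - 1) \<le> 1"
    using s barrier_horizon_bounds(2)[OF b1, of L] scaling_exp_gt_1[OF pos b1] by (auto intro!: powr_le1)
  then have "(1/4) powr \<beta> * s powr (scaling_exp \<beta> - 1) \<le> (1/4::real) powr \<beta>"
    by (intro mult_left_le) auto
  also have "\<dots> \<le> barrier \<beta> L g s j powr \<beta>"
    using barrier_created_bounds[OF True] pos by (intro powr_mono2) auto
  moreover have "profile_coeff \<beta> L (g j) = 1/4" using True profile_coeff_0[OF b, of L] by simp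
  ultimately show ?thesis by (simp only:)
qed (simp add: barrier_powr)

lemma barrier_powr_le_of_neg:
  assumes neg: "\<beta> < 0"
  shows "barrier \<beta> L g s j powr \<beta> \<le> profile_power \<beta> L (g j) * s powr (scaling_exp \<beta> - 1)"
proof (cases "g j = 0")
  case True
  have "s powr 0 \<le> s powr (scaling_exp \<beta> - 1)"
    using s barrier_horizon_bounds(2)[of \<beta> L] scaling_exp_lt_1[OF neg] neg by (intro powr_mono') auto
  then have "4 powr (-\<beta>) \<le> 4 powr (-\<beta>) * s powr (scaling_exp \<beta> - 1)"
    using s by (simp add: mult_le_cancel_left1)
  moreover have "barrier \<beta> L g s j powr \<beta> \<le> (1/4) powr \<beta>"
    using barrier_created_bounds[OF True] neg by (intro powr_mono2') auto
  moreover have "(1/4::real) powr \<beta> = 4 powr (-\<beta>)" by (simp add: powr_divide powr_minus_divide)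
  moreover have e0: "profile_power \<beta> L (g j) = 4 powr (-\<beta>)" using True unfolding profile_power_def by simp
  ultimately show ?thesis unfolding e0 by linarith
next
  case False
  have "g j \<le> L" using g unfolding gap_profile_def by blast
  then show ?thesis using barrier_powr[OF False] profile_coeff_powr_of_neg[OF neg, of "g j" L] by simp
qed

text \<open>On created sites the barrier decays at rate at least \<open>created_rate\<close>, which dominates
  the bounded Laplacian there; at distance \<open>n \<ge> 1\<close> the self-similar term \<open>a\<^sub>n s\<^sup>\<gamma>\<close> has
  time derivative \<open>\<gamma> a\<^sub>n s\<^sup>\<gamma>\<^sup>-\<^sup>1\<close>, matching \<open>(a\<^sub>n s\<^sup>\<gamma>)\<^sup>\<beta> = a\<^sub>n\<^sup>\<beta> s\<^sup>\<gamma>\<^sup>-\<^sup>1\<close>, so the choice of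
  \<open>a\<^sub>n\<close> is what makes it a subsolution.\<close>

lemma barrier_subsolution_pos:
  assumes pos: "0 < \<beta>"
  shows "barrier_deriv \<beta> L g s k \<le> dlap (\<lambda>j. Gb \<beta> (barrier \<beta> L g s j)) k"
proof -
  have b1: "\<beta> < 1" using b pos by auto
  define q where "q = s powr (scaling_exp \<beta> - 1)"
  have q: "0 < q" unfolding q_def using s by simp
  have G: "0 \<le> Gb \<beta> (barrier \<beta> L g s j) \<and> Gb \<beta> (barrier \<beta> L g s j) \<le> 1" for j
  proof -
    have "0 < profile_coeff_min \<beta> L * s powr scaling_exp \<beta>" using profile_coeff_min_pos[OF b] s by simp
    then have "0 \<le> barrier \<beta> L g s j" using barrier_ge[of j] by linarith
    moreover have "barrier \<beta> L g s j \<le> 1" using barrier_le_half[of j] by linarith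
    ultimately show ?thesis unfolding Gb_of_pos[OF pos] using pos by (auto intro: powr_le1)
  qed
  show ?thesis
  proof (cases "g k = 0")
    case True
    have "created_rate \<beta> L * 1 \<le> created_rate \<beta> L * (1 + scaling_exp \<beta> * q)"
      using created_rate_bounds[OF b1, of L] scaling_exp_pos[OF b1] q by (intro mult_left_mono) auto
    then have "barrier_deriv \<beta> L g s k \<le> - created_rate \<beta> L"
      unfolding barrier_deriv_def q_def using True by simp
    then show ?thesis
      unfolding dlap_def using G[of "k - 1"] G[of k] G[of "k + 1"] created_rate_bounds[OF b1, of L]
        by linarith
  next
    case False
    define d where "d = g k"
    have d1: "1 \<le> d" using False unfolding d_def by simp
    have "g (k - 1) = d - 1" using g False unfolding gap_profile_def d_def by auto
    then have left: "profile_coeff \<beta> L (d - 1) powr \<beta> * q \<le> Gb \<beta> (barrier \<beta> L g s (k - 1))"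
      unfolding Gb_of_pos[OF pos] q_def using barrier_powr_ge_of_pos[OF pos, of "k - 1"] by simp
    have centre: "Gb \<beta> (barrier \<beta> L g s k) = profile_coeff \<beta> L d powr \<beta> * q"
      unfolding Gb_of_pos[OF pos] d_def q_def using barrier_powr[OF False] .
    have "(profile_coeff \<beta> L d * scaling_exp \<beta> + 2 * profile_coeff \<beta> L d powr \<beta>) * q
        \<le> profile_coeff \<beta> L (d - 1) powr \<beta> * q"
      using profile_coeff_step_pos[OF pos b1 d1, of L] q by (intro mult_right_mono) auto
    moreover have "barrier_deriv \<beta> L g s k = profile_coeff \<beta> L d * scaling_exp \<beta> * q"
      unfolding barrier_deriv_def q_def d_def using False by simp
    ultimately show ?thesis
      unfolding dlap_def using left centre G[of "k + 1"] by (simp add: algebra_simps)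
  qed
qed

lemma barrier_subsolution_neg:
  assumes neg: "\<beta> < 0"
  shows "barrier_deriv \<beta> L g s k \<le> dlap (\<lambda>j. Gb \<beta> (barrier \<beta> L g s j)) k"
proof -
  have gL: "g j \<le> L" for j using g unfolding gap_profile_def by blast
  define q where "q = s powr (scaling_exp \<beta> - 1)"
  have q: "0 < q" unfolding q_def using s by simp
  have site: "barrier \<beta> L g s j powr \<beta> \<le> profile_power \<beta> L (g j) * q" for j
    unfolding q_def by (rule barrier_powr_le_of_neg[OF neg])
  show ?thesis
  proof (cases "g k = 0")
    case True
    have le_max: "barrier \<beta> L g s j powr \<beta> \<le> profile_power_max \<beta> L * q" for j
    proof -
      have "profile_power \<beta> L (g j) * q \<le> profile_power_max \<beta> L * q"
        using profile_power_le_max[of "g j" L \<beta>] gL[of j] q by (intro mult_right_mono) auto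
      then show ?thesis using site[of j] by linarith
    qed
    have "barrier_deriv \<beta> L g s k \<le> - created_rate \<beta> L * scaling_exp \<beta> * q"
      unfolding barrier_deriv_def q_def using True created_rate_bounds[of \<beta> L] neg q
      by (simp add: algebra_simps q_def)
    also have "\<dots> \<le> - 2 * profile_power_max \<beta> L * q"
      using created_rate_bounds[of \<beta> L] neg q by (simp add: mult_right_mono)
    moreover have "0 \<le> barrier \<beta> L g s k powr \<beta>" by simp
    ultimately show ?thesis
      unfolding dlap_def Gb_of_neg[OF neg] using le_max[of "k - 1"] le_max[of "k + 1"] by linarith
  next
    case False
    define d where "d = g k"
    have d1: "1 \<le> d" and dL: "d \<le> L" using False gL[of k] unfolding d_def by auto
    have "g (k - 1) = d - 1" using g False unfolding gap_profile_def d_def by auto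
    then have left: "barrier \<beta> L g s (k - 1) powr \<beta> \<le> profile_power \<beta> L (d - 1) * q"
      using site[of "k - 1"] by simp
    have right: "barrier \<beta> L g s (k + 1) powr \<beta> \<le> profile_power \<beta> L (d + 1) * q"
    proof (cases "g (k + 1) = 0")
      case True
      have "profile_power \<beta> L 0 * q \<le> profile_power \<beta> L (d + 1) * q"
        using profile_power_ge[of "d + 1" L \<beta>] dL q unfolding profile_power_def[of _ _ 0]
        by (intro mult_right_mono) auto
      then show ?thesis using site[of "k + 1"] True by simp
    next
      case False
      moreover have "g (k + 1) = 0 \<or> g (k + 1) = g k + 1" using g unfolding gap_profile_def by blast
      ultimately show ?thesis using site[of "k + 1"] unfolding d_def by simp
    qed
    have centre: "barrier \<beta> L g s k powr \<beta> = profile_power \<beta> L d * q"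
      using barrier_powr[OF False] profile_coeff_powr_of_neg[OF neg, of d L] dL unfolding d_def q_def by simp
    have "profile_coeff \<beta> L d * scaling_exp \<beta> * q
        \<le> (2 * profile_power \<beta> L d - profile_power \<beta> L (d - 1) - profile_power \<beta> L (d + 1)) * q"
      using profile_coeff_step_neg[OF neg d1 dL] q by (intro mult_right_mono) auto
    moreover have "barrier_deriv \<beta> L g s k = profile_coeff \<beta> L d * scaling_exp \<beta> * q"
      unfolding barrier_deriv_def q_def d_def using False by simp
    ultimately show ?thesis
      unfolding dlap_def Gb_of_neg[OF neg] using left right centre by (simp add: algebra_simps)
  qed
qed

lemma barrier_subsolution: "barrier_deriv \<beta> L g s k \<le> dlap (\<lambda>j. Gb \<beta> (barrier \<beta> L g s j)) k"
  using barrier_subsolution_pos barrier_subsolution_neg b by (cases "0 < \<beta>") auto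

end

section \<open>Distance to the created sites\<close>

definition left_gap :: "(int \<Rightarrow> int) \<Rightarrow> int \<Rightarrow> nat" where
  "left_gap \<Psi> k = (LEAST n. k - int n \<in> range \<Psi>)"

lemma strict_mono_int_add_le:
  assumes "strict_mono (\<Psi> :: int \<Rightarrow> int)"
  shows "\<Psi> i + int n \<le> \<Psi> (i + int n)"
proof (induction n)
  case (Suc n)
  have "\<Psi> (i + int n) < \<Psi> (i + int n + 1)" using assms by (simp add: strict_mono_def)
  moreover have e: "i + int (Suc n) = i + int n + 1" by simp
  ultimately show ?case using Suc unfolding e by linarith
qed simp

lemma strict_mono_int_bracket:
  assumes sm: "strict_mono (\<Psi> :: int \<Rightarrow> int)"
  shows "\<exists>j. \<Psi> j \<le> k \<and> k < \<Psi> (j + 1)"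
proof -
  define j0 where "j0 = min 0 (k - \<Psi> 0)"
  have "\<Psi> j0 + int (nat (- j0)) \<le> \<Psi> (j0 + int (nat (- j0)))" by (rule strict_mono_int_add_le[OF sm])
  then have j0k: "\<Psi> j0 \<le> k" unfolding j0_def by simp
  define S where "S = {n::nat. \<Psi> (j0 + int n) \<le> k}"
  have "S \<subseteq> {..nat (k - \<Psi> j0)}"
  proof
    fix n assume "n \<in> S"
    then have "\<Psi> j0 + int n \<le> k" unfolding S_def using strict_mono_int_add_le[OF sm, of j0 n] by simp
    then show "n \<in> {..nat (k - \<Psi> j0)}" by simp
  qed
  then have fin: "finite S" by (rule finite_subset) simp
  have "0 \<in> S" unfolding S_def using j0k by simp
  define m where "m = Max S"
  have "m \<in> S" unfolding m_def using fin \<open>0 \<in> S\<close> by (intro Max_in) auto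
  moreover have "Suc m \<notin> S" using Max_ge[OF fin, of "Suc m"] unfolding m_def by auto
  moreover have "j0 + int (Suc m) = j0 + int m + 1" by simp
  ultimately show ?thesis unfolding S_def
    by (intro exI[of _ "j0 + int m"]) (auto simp only: mem_Collect_eq not_le)
qed

context
  fixes \<Psi> :: "int \<Rightarrow> int" and L :: nat
  assumes sm: "strict_mono \<Psi>" and jumps: "\<And>k. jumps \<Psi> k \<le> int L"
begin

lemma range_within_gap: "\<exists>n \<le> L. k - int n \<in> range \<Psi>"
proof -
  obtain j where j: "\<Psi> j \<le> k" "k < \<Psi> (j + 1)" using strict_mono_int_bracket[OF sm] by blast
  then have "k - int (nat (k - \<Psi> j)) = \<Psi> j" "nat (k - \<Psi> j) \<le> L"
    using jumps[of j] unfolding jumps_def by auto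
  then show ?thesis by (intro exI[of _ "nat (k - \<Psi> j)"]) auto
qed

lemma left_gap_in_range: "k - int (left_gap \<Psi> k) \<in> range \<Psi>"
  unfolding left_gap_def by (rule LeastI_ex) (use range_within_gap in blast)

lemma left_gap_eq_0_iff: "left_gap \<Psi> k = 0 \<longleftrightarrow> k \<in> range \<Psi>"
  using left_gap_in_range[of k] unfolding left_gap_def by (auto intro!: Least_eq_0)

lemma gap_profile_left_gap: "gap_profile L (left_gap \<Psi>)"
  unfolding gap_profile_def
proof (intro conjI allI impI)
  have notin: "k' - int m \<notin> range \<Psi>" if "m < left_gap \<Psi> k'" for k' m
    using that unfolding left_gap_def by (rule not_less_Least)
  fix k
  obtain n where "n \<le> L" "k - int n \<in> range \<Psi>" using range_within_gap by blast
  then show "left_gap \<Psi> k \<le> L" unfolding left_gap_def by (meson Least_le order_trans)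
  show "left_gap \<Psi> (k - 1) = left_gap \<Psi> k - 1" if "left_gap \<Psi> k \<noteq> 0"
    unfolding left_gap_def[of _ "k - 1"]
  proof (rule Least_equality)
    show "k - 1 - int (left_gap \<Psi> k - 1) \<in> range \<Psi>"
      using left_gap_in_range[of k] that by (simp add: of_nat_diff)
    fix y assume "k - 1 - int y \<in> range \<Psi>"
    then have "\<not> Suc y < left_gap \<Psi> k" using notin[of "Suc y" k] by (auto simp: algebra_simps)
    then show "left_gap \<Psi> k - 1 \<le> y" by simp
  qed
  show "left_gap \<Psi> (k + 1) = 0 \<or> left_gap \<Psi> (k + 1) = left_gap \<Psi> k + 1"
  proof (cases "k + 1 \<in> range \<Psi>")
    case True
    then show ?thesis using left_gap_eq_0_iff by simp
  next
    case False
    have "left_gap \<Psi> (k + 1) = left_gap \<Psi> k + 1"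
      unfolding left_gap_def[of _ "k + 1"]
    proof (rule Least_equality)
      show "k + 1 - int (left_gap \<Psi> k + 1) \<in> range \<Psi>" using left_gap_in_range[of k] by simp
      fix y assume y: "k + 1 - int y \<in> range \<Psi>"
      show "left_gap \<Psi> k + 1 \<le> y"
      proof (cases y)
        case 0
        then show ?thesis using y False by simp
      next
        case (Suc y')
        then have "k - int y' \<in> range \<Psi>" using y by (simp add: algebra_simps)
        then have "\<not> y' < left_gap \<Psi> k" using notin by blast
        then show ?thesis using Suc by simp
      qed
    qed
    then show ?thesis by simp
  qed
qed

end

section \<open>A lower bound uniform in the regularisation\<close>

lemma strip_solution_le:
  assumes \<beta>: "\<beta> \<noteq> 0" "\<beta> < 1" and \<delta>: "0 < \<delta>" "0 < \<delta>'"
    and U: "strip_solution \<beta> \<delta> w U" and U': "strip_solution \<beta> \<delta>' w' U'"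
    and w: "\<And>k. w' k \<le> w k" and t: "0 \<le> t"
  shows "U' t k \<le> U t k"
proof (rule comparison_principle[where \<eta> = "min \<delta> \<delta>'", OF \<beta> _ _ _ _ _ _ _ _ t order_refl])
  show "0 < min \<delta> \<delta>'" using \<delta> by simp
  show "continuous_on {0..t} (\<lambda>s. U s k)" for k
    using strip_solutionD(2)[OF U] by (rule continuous_on_subset) auto
  show "continuous_on {0..t} (\<lambda>s. U' s k)" for k
    using strip_solutionD(2)[OF U'] by (rule continuous_on_subset) auto
  show "\<exists>d. ((\<lambda>s. U s k) has_real_derivative d) (at s) \<and> dlap (\<lambda>j. Gb \<beta> (U s j)) k \<le> d"
    "\<exists>d. ((\<lambda>s. U' s k) has_real_derivative d) (at s) \<and> d \<le> dlap (\<lambda>j. Gb \<beta> (U' s j)) k"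
    if "0 < s" for k s
    using strip_solutionD(5)[OF U that] strip_solutionD(5)[OF U' that] by blast+
  show "min \<delta> \<delta>' \<le> U s k \<and> U s k \<le> 1" if "0 \<le> s" for k s
    using strip_solutionD(3,4)[OF U that, of k] by linarith
  show "min \<delta> \<delta>' \<le> U' s k \<and> U' s k \<le> 1" if "0 \<le> s" for k s
    using strip_solutionD(3,4)[OF U' that, of k] by linarith
  show "U' 0 k \<le> U 0 k" for k
    using w unfolding strip_solutionD(1)[OF U] strip_solutionD(1)[OF U'] .
qed

lemma strip_solution_shift:
  assumes U: "strip_solution \<beta> \<delta> w U" and T: "0 \<le> T"
  shows "strip_solution \<beta> \<delta> (U T) (\<lambda>s. U (s + T))"
  unfolding strip_solution_def strip_path_def
proof (intro conjI allI impI)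
  fix k
  show "continuous_on {0..} (\<lambda>s. U (s + T) k)"
    by (rule continuous_on_compose2[OF strip_solutionD(2)[OF U]]) (use T in \<open>auto intro: continuous_intros\<close>)
  fix s :: real
  show "\<delta> \<le> U (s + T) k" "U (s + T) k \<le> 1" if "0 \<le> s"
    using strip_solutionD(3,4)[OF U] that T by auto
  show "((\<lambda>s. U (s + T) k) has_real_derivative dlap (\<lambda>j. Gb \<beta> (U (s + T) j)) k) (at s)" if "0 < s"
    using strip_solutionD(5)[OF U, of "s + T" k] that T by (simp add: DERIV_shift)
qed simp

lemma strip_solution_const: "0 < c \<Longrightarrow> c \<le> 1 \<Longrightarrow> strip_solution \<beta> c (\<lambda>_. c) (\<lambda>_ _. c)"
  unfolding strip_solution_def strip_path_def dlap_def by auto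

text \<open>Half the horizon, so that a barrier started at any time \<open>\<le> lower_time\<close> stays within
  \<open>barrier_horizon\<close> for a further \<open>lower_time\<close>.\<close>

definition lower_time :: "real \<Rightarrow> nat \<Rightarrow> real" where
  "lower_time \<beta> L = barrier_horizon \<beta> L / 2"

definition lower_const :: "real \<Rightarrow> nat \<Rightarrow> real" where
  "lower_const \<beta> L = profile_coeff_min \<beta> L * lower_time \<beta> L powr scaling_exp \<beta>"

definition max_regularization :: "real \<Rightarrow> nat \<Rightarrow> real" where
  "max_regularization \<beta> L = min (1/2) (lower_time \<beta> L powr scaling_exp \<beta>)"

lemma lower_time_bounds: "\<beta> < 1 \<Longrightarrow> 0 < lower_time \<beta> L \<and> lower_time \<beta> L \<le> 1/2"
  unfolding lower_time_def using barrier_horizon_bounds[of \<beta> L] by auto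

lemma lower_const_pos: "\<beta> < 0 \<or> (0 < \<beta> \<and> \<beta> < 1) \<Longrightarrow> 0 < lower_const \<beta> L"
  unfolding lower_const_def using profile_coeff_min_pos[of \<beta> L] lower_time_bounds[of \<beta> L] by auto

lemma max_regularization_pos: "\<beta> < 0 \<or> (0 < \<beta> \<and> \<beta> < 1) \<Longrightarrow> 0 < max_regularization \<beta> L"
  unfolding max_regularization_def using lower_time_bounds[of \<beta> L] by auto

lemma regularization_time_le:
  assumes b: "\<beta> < 1" and \<delta>: "0 < \<delta>" "\<delta> \<le> max_regularization \<beta> L"
  shows "\<delta> powr (1 / scaling_exp \<beta>) \<le> lower_time \<beta> L"
proof -
  have \<gamma>: "0 < scaling_exp \<beta>" using scaling_exp_pos[OF b] .
  have "\<delta> powr (1 / scaling_exp \<beta>) \<le> (lower_time \<beta> L powr scaling_exp \<beta>) powr (1 / scaling_exp \<beta>)"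
    using \<delta> \<gamma> unfolding max_regularization_def by (intro powr_mono2) auto
  also have "\<dots> = lower_time \<beta> L" using lower_time_bounds[OF b, of L] \<gamma> by (simp add: powr_powr)
  finally show ?thesis .
qed

text \<open>The barrier is started at time \<open>\<tau> = \<delta>\<^sup>1\<^sup>/\<^sup>\<gamma>\<close>, where its values at gap sites equal
  \<open>a\<^sub>n \<delta> \<le> \<delta>\<close>, below the regularised data.\<close>

lemma barrier_at_regularization_time_le:
  assumes b: "\<beta> < 0 \<or> (0 < \<beta> \<and> \<beta> < 1)" and g: "gap_profile L g"
    and \<delta>: "0 < \<delta>" "\<delta> \<le> max_regularization \<beta> L"
    and w: "\<And>k. \<delta> \<le> w k" "\<And>k. g k = 0 \<Longrightarrow> 1/2 \<le> w k"
  shows "barrier \<beta> L g (\<delta> powr (1 / scaling_exp \<beta>)) k \<le> w k"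
proof (cases "g k = 0")
  case True
  have b1: "\<beta> < 1" using b by auto
  have "0 < \<delta> powr (1 / scaling_exp \<beta>)" using \<delta> by simp
  moreover have "\<delta> powr (1 / scaling_exp \<beta>) \<le> barrier_horizon \<beta> L"
    using regularization_time_le[OF b1 \<delta>] lower_time_bounds[OF b1, of L] unfolding lower_time_def by linarith
  ultimately show ?thesis using barrier_le_half[OF b g] w(2)[OF True] by (meson order_trans)
next
  case False
  have "0 < scaling_exp \<beta>" using scaling_exp_pos[of \<beta>] b by auto
  then have \<tau>\<gamma>: "(\<delta> powr (1 / scaling_exp \<beta>)) powr scaling_exp \<beta> = \<delta>"
    using \<delta> by (simp add: powr_powr)
  have "g k \<le> L" using g unfolding gap_profile_def by blast
  then have "profile_coeff \<beta> L (g k) * \<delta> \<le> 1 * \<delta>"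
    using profile_coeff_le_quarter[OF b] \<delta> by (intro mult_right_mono) force+
  then show ?thesis using False \<tau>\<gamma> w(1)[of k] unfolding barrier_def by simp
qed

lemma barrier_le_strip_solution:
  assumes b: "\<beta> < 0 \<or> (0 < \<beta> \<and> \<beta> < 1)" and g: "gap_profile L g"
    and U: "strip_solution \<beta> \<delta> w U" and \<delta>: "0 < \<delta>" "\<delta> \<le> max_regularization \<beta> L"
    and w: "\<And>k. g k = 0 \<Longrightarrow> 1/2 \<le> w k"
    and t: "0 \<le> t" "t \<le> lower_time \<beta> L"
  shows "barrier \<beta> L g (t + \<delta> powr (1 / scaling_exp \<beta>)) k \<le> U t k"
proof -
  have b0: "\<beta> \<noteq> 0" "\<beta> < 1" using b by auto
  have \<gamma>: "0 < scaling_exp \<beta>" using scaling_exp_pos[OF b0(2)] .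
  define T where "T = lower_time \<beta> L"
  have T: "0 < T" "2 * T = barrier_horizon \<beta> L" using lower_time_bounds[OF b0(2), of L]
    unfolding T_def lower_time_def by auto
  define \<tau> where "\<tau> = \<delta> powr (1 / scaling_exp \<beta>)"
  have \<tau>0: "0 < \<tau>" unfolding \<tau>_def using \<delta> by simp
  have \<tau>\<gamma>: "\<tau> powr scaling_exp \<beta> = \<delta>" unfolding \<tau>_def using \<delta> \<gamma> by (simp add: powr_powr)
  have \<tau>T: "\<tau> \<le> T" unfolding \<tau>_def T_def using regularization_time_le[OF b0(2) \<delta>] .
  have s: "0 < s + \<tau>" "s + \<tau> \<le> barrier_horizon \<beta> L" if "0 \<le> s" "s \<le> T" for s
    using that \<tau>0 \<tau>T T by auto
  have am: "0 < profile_coeff_min \<beta> L" "profile_coeff_min \<beta> L \<le> 1/4"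
    using profile_coeff_min_pos[OF b] profile_coeff_min_le[OF b] by auto
  let ?v = "\<lambda>s k. barrier \<beta> L g (s + \<tau>) k"
  have "?v t k \<le> U t k"
  proof (rule comparison_principle[where \<eta> = "profile_coeff_min \<beta> L * \<delta>" and T = T,
        OF b0 _ _ _ _ _ _ _ _ t(1)])
    show "0 < profile_coeff_min \<beta> L * \<delta>" using am \<delta> by simp
    show "continuous_on {0..T} (\<lambda>s. U s k)" for k
      using strip_solutionD(2)[OF U] by (rule continuous_on_subset) auto
    show "continuous_on {0..T} (\<lambda>s. ?v s k)" for k
      by (rule continuous_on_compose2[OF continuous_on_barrier]) (use \<tau>0 in \<open>auto intro: continuous_intros\<close>)
    show "\<exists>d. ((\<lambda>s. U s k) has_real_derivative d) (at s) \<and> dlap (\<lambda>j. Gb \<beta> (U s j)) k \<le> d"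
      if "0 < s" for k s
      using strip_solutionD(5)[OF U that] by blast
    show "\<exists>d. ((\<lambda>s. ?v s k) has_real_derivative d) (at s) \<and> d \<le> dlap (\<lambda>j. Gb \<beta> (?v s j)) k"
      if "0 < s" "s < T" for k s
    proof -
      have "((\<lambda>s. ?v s k) has_real_derivative barrier_deriv \<beta> L g (s + \<tau>) k) (at s)"
        using barrier_has_real_derivative[of "s + \<tau>" \<beta> L g k] that \<tau>0 by (simp add: DERIV_shift)
      moreover have "barrier_deriv \<beta> L g (s + \<tau>) k \<le> dlap (\<lambda>j. Gb \<beta> (?v s j)) k"
        using barrier_subsolution[OF b g s[of s]] that by simp
      ultimately show ?thesis by blast
    qed
    show "profile_coeff_min \<beta> L * \<delta> \<le> U s k \<and> U s k \<le> 1" if "0 \<le> s" for k s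
    proof -
      have "profile_coeff_min \<beta> L * \<delta> \<le> 1 * \<delta>" using am \<delta> by (intro mult_right_mono) auto
      then show ?thesis using strip_solutionD(3,4)[OF U that, of k] by auto
    qed
    show "profile_coeff_min \<beta> L * \<delta> \<le> ?v s k \<and> ?v s k \<le> 1" if "0 \<le> s" "s \<le> T" for k s
    proof -
      have "\<tau> powr scaling_exp \<beta> \<le> (s + \<tau>) powr scaling_exp \<beta>" using that \<tau>0 \<gamma> by (intro powr_mono2) auto
      then have "profile_coeff_min \<beta> L * \<delta> \<le> profile_coeff_min \<beta> L * (s + \<tau>) powr scaling_exp \<beta>"
        using am \<tau>\<gamma> by (intro mult_left_mono) auto
      then show ?thesis using barrier_ge[OF b g s[OF that], of k] barrier_le_half[OF b g s[OF that], of k]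
        by linarith
    qed
    show "?v 0 k \<le> U 0 k" for k
      using barrier_at_regularization_time_le[OF b g \<delta> _ w] strip_solutionD(1,3)[OF U] unfolding \<tau>_def
      by auto
  qed (use t(2) in \<open>simp add: T_def\<close>)
  then show ?thesis unfolding \<tau>_def .
qed

lemma strip_solution_lower_bound:
  assumes b: "\<beta> < 0 \<or> (0 < \<beta> \<and> \<beta> < 1)" and g: "gap_profile L g"
    and U: "strip_solution \<beta> \<delta> w U" and \<delta>: "0 < \<delta>" "\<delta> \<le> max_regularization \<beta> L"
    and w: "\<And>k. g k = 0 \<Longrightarrow> 1/2 \<le> w k" and t: "0 \<le> t"
  shows "lower_const \<beta> L * min 1 (t powr scaling_exp \<beta>) \<le> U t k"
proof -
  have b0: "\<beta> \<noteq> 0" "\<beta> < 1" using b by auto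
  define T where "T = lower_time \<beta> L"
  have T: "0 < T" "T \<le> 1/2" using lower_time_bounds[OF b0(2), of L] unfolding T_def by auto
  have \<gamma>: "0 < scaling_exp \<beta>" using scaling_exp_pos[OF b0(2)] .
  have am: "0 < profile_coeff_min \<beta> L" using profile_coeff_min_pos[OF b] .
  have early: "profile_coeff_min \<beta> L * s powr scaling_exp \<beta> \<le> U s j" if "0 \<le> s" "s \<le> T" for s j
  proof -
    let ?s = "s + \<delta> powr (1 / scaling_exp \<beta>)"
    have "0 < ?s" "?s \<le> barrier_horizon \<beta> L"
    proof -
      have "0 < \<delta> powr (1 / scaling_exp \<beta>)" using \<delta> by simp
      then show "0 < ?s" using that by linarith
      show "?s \<le> barrier_horizon \<beta> L"
        using that regularization_time_le[OF b0(2) \<delta>] unfolding T_def lower_time_def by linarith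
    qed
    have "s powr scaling_exp \<beta> \<le> ?s powr scaling_exp \<beta>" using that \<delta> \<gamma> by (intro powr_mono2) auto
    then have "profile_coeff_min \<beta> L * s powr scaling_exp \<beta> \<le> profile_coeff_min \<beta> L * ?s powr scaling_exp \<beta>"
      using am by (intro mult_left_mono) auto
    also have "\<dots> \<le> barrier \<beta> L g ?s j" by (rule barrier_ge[OF b g \<open>0 < ?s\<close> \<open>?s \<le> _\<close>])
    also have "\<dots> \<le> U s j" using barrier_le_strip_solution[OF b g U \<delta> w that[unfolded T_def]] .
    finally show ?thesis .
  qed
  define m where "m = lower_const \<beta> L"
  have m: "m = profile_coeff_min \<beta> L * T powr scaling_exp \<beta>" unfolding m_def lower_const_def T_def ..
  have T\<gamma>: "T powr scaling_exp \<beta> \<le> 1" using T \<gamma> by (intro powr_le1) auto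
  have m0: "0 < m" unfolding m using am T by simp
  show ?thesis
  proof (cases "t \<le> T")
    case True
    have "m * min 1 (t powr scaling_exp \<beta>) \<le> m * t powr scaling_exp \<beta>"
      using m0 by (intro mult_left_mono) auto
    also have "\<dots> \<le> profile_coeff_min \<beta> L * t powr scaling_exp \<beta>"
      unfolding m using am T\<gamma> by (intro mult_right_mono) (auto simp: mult_left_le)
    also have "\<dots> \<le> U t k" using early[OF t True] .
    finally show ?thesis unfolding m_def .
  next
    case False
    have m1: "m \<le> 1"
      unfolding m using T\<gamma> profile_coeff_min_le[OF b, of L] am by (intro mult_le_one) auto
    have mT: "m \<le> U T j" for j using early[of T j] T unfolding m by simp
    have "m \<le> U (t - T + T) k"
      using strip_solution_le[OF b0 \<delta>(1) m0 strip_solution_shift[OF U] strip_solution_const[OF m0 m1],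
          of T "t - T" k, OF _ mT] False T
      by simp
    then have "m \<le> U t k" by simp
    moreover have "m * min 1 (t powr scaling_exp \<beta>) \<le> m" using m0 by (intro mult_left_le) auto
    ultimately show ?thesis unfolding m_def by linarith
  qed
qed

section \<open>Removing the regularisation\<close>

definition lower_profile :: "real \<Rightarrow> nat \<Rightarrow> real \<Rightarrow> real" where
  "lower_profile \<beta> L t = lower_const \<beta> L * min 1 (t powr scaling_exp \<beta>)"

definition controlled_solution :: "real \<Rightarrow> nat \<Rightarrow> (real \<Rightarrow> int \<Rightarrow> real) \<Rightarrow> bool" where
  "controlled_solution \<beta> L U \<longleftrightarrow> (\<forall>k. continuous_on {0..} (\<lambda>t. U t k)) \<and>
     (\<forall>k t. 0 < t \<longrightarrow> ((\<lambda>s. U s k) has_real_derivative dlap (\<lambda>j. Gb \<beta> (U t j)) k) (at t)) \<and>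
     (\<forall>k t. 0 \<le> t \<longrightarrow> lower_profile \<beta> L t \<le> U t k \<and> U t k \<le> 1)"

lemma controlled_solutionD:
  assumes "controlled_solution \<beta> L U"
  shows "continuous_on {0..} (\<lambda>t. U t k)"
    and "0 < t \<Longrightarrow> ((\<lambda>s. U s k) has_real_derivative dlap (\<lambda>j. Gb \<beta> (U t j)) k) (at t)"
    and "0 \<le> t \<Longrightarrow> lower_profile \<beta> L t \<le> U t k" "0 \<le> t \<Longrightarrow> U t k \<le> 1"
  using assms unfolding controlled_solution_def by auto

text \<open>Along the lower profile \<open>c min(1, t\<^sup>\<gamma>)\<close> the speed \<open>|\<Delta> G\<^sub>\<beta>(u)|\<close> is at most
  \<open>rate_bound\<close>, which is integrable at \<open>0\<close> because \<open>\<gamma> > 0\<close>; its primitive is a modulus of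
  continuity in time that does not depend on the regularisation.\<close>

definition rate_bound :: "real \<Rightarrow> nat \<Rightarrow> real \<Rightarrow> real" where
  "rate_bound \<beta> L t = 2 + 2 * lower_const \<beta> L powr \<beta> * (1 + t powr (scaling_exp \<beta> - 1))"

definition rate_primitive :: "real \<Rightarrow> nat \<Rightarrow> real \<Rightarrow> real" where
  "rate_primitive \<beta> L t = 2 * t + 2 * lower_const \<beta> L powr \<beta> * (t + t powr scaling_exp \<beta> / scaling_exp \<beta>)"

lemma lower_profile_pos: "\<beta> < 0 \<or> (0 < \<beta> \<and> \<beta> < 1) \<Longrightarrow> 0 < t \<Longrightarrow> 0 < lower_profile \<beta> L t"
  unfolding lower_profile_def using lower_const_pos[of \<beta> L] by simp

lemma lower_profile_nonneg: "\<beta> < 0 \<or> (0 < \<beta> \<and> \<beta> < 1) \<Longrightarrow> 0 \<le> lower_profile \<beta> L t"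
  unfolding lower_profile_def using lower_const_pos[of \<beta> L] by simp

lemma lower_profile_mono:
  "\<beta> < 0 \<or> (0 < \<beta> \<and> \<beta> < 1) \<Longrightarrow> 0 \<le> s \<Longrightarrow> s \<le> t \<Longrightarrow> lower_profile \<beta> L s \<le> lower_profile \<beta> L t"
proof -
  assume b: "\<beta> < 0 \<or> (0 < \<beta> \<and> \<beta> < 1)" and st: "0 \<le> s" "s \<le> t"
  have "s powr scaling_exp \<beta> \<le> t powr scaling_exp \<beta>"
    using st scaling_exp_pos[of \<beta>] b by (intro powr_mono2) auto
  then have "min 1 (s powr scaling_exp \<beta>) \<le> min 1 (t powr scaling_exp \<beta>)" by simp
  then show ?thesis unfolding lower_profile_def
    using lower_const_pos[OF b, of L] by (intro mult_left_mono) auto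
qed

lemma rate_bound_ge_2: "2 \<le> rate_bound \<beta> L t" unfolding rate_bound_def by simp

lemma abs_dlap_Gb_le_rate_bound:
  assumes b: "\<beta> < 0 \<or> (0 < \<beta> \<and> \<beta> < 1)" and t: "0 < t"
    and x: "\<And>j. lower_profile \<beta> L t \<le> x j \<and> x j \<le> 1"
  shows "\<bar>dlap (\<lambda>j. Gb \<beta> (x j)) k\<bar> \<le> rate_bound \<beta> L t"
proof -
  have l0: "0 < lower_profile \<beta> L t" using lower_profile_pos[OF b t] .
  have xp: "0 < x j" for j using x[of j] l0 by linarith
  show ?thesis
  proof (cases "0 < \<beta>")
    case True
    have "0 \<le> Gb \<beta> (x j) \<and> Gb \<beta> (x j) \<le> 1" for j
      unfolding Gb_of_pos[OF True] using x[of j] xp[of j] True by (auto intro: powr_le1)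
    then have "\<bar>dlap (\<lambda>j. Gb \<beta> (x j)) k\<bar> \<le> 2" unfolding dlap_def
      by (smt (verit))
    then show ?thesis using rate_bound_ge_2[of \<beta> L t] by linarith
  next
    case False
    then have bn: "\<beta> < 0" using b by auto
    define l where "l = lower_profile \<beta> L t"
    have pb: "1 \<le> x j powr \<beta> \<and> x j powr \<beta> \<le> l powr \<beta>" for j
    proof
      show "1 \<le> x j powr \<beta>" using x[of j] xp[of j] bn
        by (metis ge_one_powr_ge_zero inverse_powr le_imp_inverse_le less_eq_real_def minus_minus
            neg_0_less_iff_less one_le_inverse_iff powr_minus)
      show "x j powr \<beta> \<le> l powr \<beta>" unfolding l_def using x[of j] l0 bn by (intro powr_mono2') auto
    qed
    have d: "\<bar>dlap (\<lambda>j. Gb \<beta> (x j)) k\<bar> \<le> 2 * l powr \<beta>"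
      unfolding dlap_def Gb_of_neg[OF bn] using pb[of "k-1"] pb[of k] pb[of "k+1"] by (simp add: abs_le_iff)
    have c0: "0 < lower_const \<beta> L" using lower_const_pos[OF b] .
    have lp: "l powr \<beta> = lower_const \<beta> L powr \<beta> * (min 1 (t powr scaling_exp \<beta>)) powr \<beta>"
      unfolding l_def lower_profile_def using c0 t by (simp add: powr_mult)
    have mb: "(min 1 (t powr scaling_exp \<beta>)) powr \<beta> \<le> 1 + t powr (scaling_exp \<beta> - 1)"
    proof (cases "t powr scaling_exp \<beta> \<le> 1")
      case True
      have "(t powr scaling_exp \<beta>) powr \<beta> = t powr (scaling_exp \<beta> - 1)"
        using scaling_exp_minus_1[of \<beta>] bn by (simp add: powr_powr)
      then show ?thesis using True by simp
    next
      case False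
      then show ?thesis by simp
    qed
    have "2 * l powr \<beta> \<le> 2 * (lower_const \<beta> L powr \<beta> * (1 + t powr (scaling_exp \<beta> - 1)))"
      unfolding lp using mb by (intro mult_left_mono) auto
    then show ?thesis using d unfolding rate_bound_def by linarith
  qed
qed

lemma rate_primitive_has_real_derivative:
  "\<beta> < 1 \<Longrightarrow> 0 < t \<Longrightarrow> (rate_primitive \<beta> L has_real_derivative rate_bound \<beta> L t) (at t)"
proof -
  assume b: "\<beta> < 1" and t: "0 < t"
  have g: "0 < scaling_exp \<beta>" using scaling_exp_pos[OF b] .
  let ?c = "lower_const \<beta> L powr \<beta>" and ?\<gamma> = "scaling_exp \<beta>"
  have "((\<lambda>t. 2 * t + 2 * ?c * (t + t powr ?\<gamma> / ?\<gamma>)) has_real_derivative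
      2 * 1 + 2 * ?c * (1 + ?\<gamma> * t powr (?\<gamma> - 1) / ?\<gamma>)) (at t)"
    using t by (auto intro!: derivative_eq_intros)
  moreover have "2 * 1 + 2 * ?c * (1 + ?\<gamma> * t powr (?\<gamma> - 1) / ?\<gamma>) = rate_bound \<beta> L t"
    unfolding rate_bound_def using g by simp
  ultimately show ?thesis unfolding rate_primitive_def[abs_def] by simp
qed

lemma continuous_on_rate_primitive: "\<beta> < 1 \<Longrightarrow> continuous_on {0..} (rate_primitive \<beta> L)"
proof -
  assume b: "\<beta> < 1"
  have g: "0 < scaling_exp \<beta>" using scaling_exp_pos[OF b] .
  have cp: "continuous_on {0..} (\<lambda>t::real. t powr scaling_exp \<beta>)"
  proof (rule continuous_on_powr')
    show "continuous_on {0..} (\<lambda>t::real. t)" by (rule continuous_on_id)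
    show "continuous_on {0..} (\<lambda>t::real. scaling_exp \<beta>)" by (rule continuous_on_const)
    show "\<forall>x\<in>{0..}. 0 \<le> x \<and> (x = 0 \<longrightarrow> 0 < scaling_exp \<beta>)" using g by auto
  qed
  have cq: "continuous_on {0..} (\<lambda>t::real. t powr scaling_exp \<beta> / scaling_exp \<beta>)"
    using cp by (rule continuous_on_divide) (use g in auto)
  show ?thesis unfolding rate_primitive_def[abs_def]
    by (intro continuous_on_add continuous_on_mult continuous_on_const continuous_on_id cq)
qed

lemma rate_bound_le_endpoints:
  assumes "0 < a" "a \<le> y" "y \<le> b"
  shows "rate_bound \<beta> L y \<le> rate_bound \<beta> L a + rate_bound \<beta> L b"
proof -
  have "y powr (scaling_exp \<beta> - 1) \<le> a powr (scaling_exp \<beta> - 1) + b powr (scaling_exp \<beta> - 1)"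
  proof (cases "0 \<le> scaling_exp \<beta> - 1")
    case True
    then have "y powr (scaling_exp \<beta> - 1) \<le> b powr (scaling_exp \<beta> - 1)"
      using assms by (intro powr_mono2) auto
    then show ?thesis using powr_ge_zero[of a "scaling_exp \<beta> - 1"] by linarith
  next
    case False
    then have "y powr (scaling_exp \<beta> - 1) \<le> a powr (scaling_exp \<beta> - 1)"
      using assms by (intro powr_mono2') auto
    then show ?thesis using powr_ge_zero[of b "scaling_exp \<beta> - 1"] by linarith
  qed
  then have "2 * lower_const \<beta> L powr \<beta> * (1 + y powr (scaling_exp \<beta> - 1))
      \<le> 2 * lower_const \<beta> L powr \<beta> * (1 + (a powr (scaling_exp \<beta> - 1) + b powr (scaling_exp \<beta> - 1)))"
    by (intro mult_left_mono) auto
  then show ?thesis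
    unfolding rate_bound_def by (simp add: algebra_simps) (use powr_ge_zero[of "lower_const \<beta> L" \<beta>] in linarith)
qed

lemma rate_primitive_Lipschitz:
  assumes b1: "\<beta> < 1" and t: "0 < t" and x: "\<bar>x - t\<bar> < t / 2"
  shows "\<bar>rate_primitive \<beta> L x - rate_primitive \<beta> L t\<bar>
      \<le> (rate_bound \<beta> L (t/2) + rate_bound \<beta> L (3 * t / 2)) * \<bar>x - t\<bar>"
proof -
  define M where "M = rate_bound \<beta> L (t/2) + rate_bound \<beta> L (3 * t / 2)"
  have Rb: "rate_bound \<beta> L y \<le> M" if "t/2 \<le> y" "y \<le> 3 * t / 2" for y
    unfolding M_def using rate_bound_le_endpoints[of "t/2" y "3 * t / 2"] that t by simp
  define a where "a = min x t"
  define c where "c = max x t"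
  have "x - t < t/2 \<and> - (x - t) < t/2" using x by (simp only: abs_less_iff)
  then have xx: "t/2 < x" "x < 3 * t / 2" by linarith+
  have ac: "a \<le> c" "t/2 < a" "c < 3 * t / 2" unfolding a_def c_def using xx t by auto
  have "\<bar>rate_primitive \<beta> L c - rate_primitive \<beta> L a\<bar> \<le> M * (c - a)"
  proof (rule abs_diff_le_of_DERIV_bound[OF ac(1)])
    have "(rate_primitive \<beta> L has_real_derivative rate_bound \<beta> L y) (at y within {a..c})"
      if "y \<in> {a..c}" for y
    proof -
      have "0 < y" using that ac t by simp
      from rate_primitive_has_real_derivative[OF b1 this, where L=L] show ?thesis
        by (rule has_field_derivative_at_within)
    qed
    then show "continuous_on {a..c} (rate_primitive \<beta> L)" by (rule DERIV_continuous_on)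
    fix y assume y: "a < y" "y < c"
    have y0: "0 < y" using y ac t by simp
    have "rate_bound \<beta> L y \<le> M" using Rb[of y] y ac by simp
    then have "\<bar>rate_bound \<beta> L y\<bar> \<le> M" using rate_bound_ge_2[of \<beta> L y] by simp
    then show "\<exists>d. (rate_primitive \<beta> L has_real_derivative d) (at y) \<and> \<bar>d\<bar> \<le> M"
      using rate_primitive_has_real_derivative[OF b1 y0, where L=L] by blast
  qed
  moreover have "c - a = \<bar>x - t\<bar>" unfolding a_def c_def by auto
  moreover have "\<bar>rate_primitive \<beta> L c - rate_primitive \<beta> L a\<bar>
      = \<bar>rate_primitive \<beta> L x - rate_primitive \<beta> L t\<bar>"
    unfolding a_def c_def by (cases "x \<le> t") (auto simp: abs_minus_commute)
  ultimately show ?thesis unfolding M_def by simp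
qed

lemma controlled_solution_modulus:
  assumes b: "\<beta> < 0 \<or> (0 < \<beta> \<and> \<beta> < 1)" and U: "controlled_solution \<beta> L U"
    and st: "0 \<le> s" "0 \<le> t"
  shows "\<bar>U t k - U s k\<bar> \<le> \<bar>rate_primitive \<beta> L t - rate_primitive \<beta> L s\<bar>"
proof -
  have b1: "\<beta> < 1" using b by auto
  have ordered: "\<bar>U t k - U s k\<bar> \<le> rate_primitive \<beta> L t - rate_primitive \<beta> L s"
    if st: "0 \<le> s" "s \<le> t" for s t
  proof (rule abs_diff_le_of_DERIV_dominated[OF st(2)])
    show "continuous_on {s..t} (\<lambda>t. U t k)"
      using controlled_solutionD(1)[OF U] by (rule continuous_on_subset) (use st in auto)
    show "continuous_on {s..t} (rate_primitive \<beta> L)"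
      using continuous_on_rate_primitive[OF b1] by (rule continuous_on_subset) (use st in auto)
    fix x assume x: "s < x" "x < t"
    have "\<bar>dlap (\<lambda>j. Gb \<beta> (U x j)) k\<bar> \<le> rate_bound \<beta> L x"
      using controlled_solutionD(3,4)[OF U] x st by (intro abs_dlap_Gb_le_rate_bound[OF b]) auto
    then show "\<exists>df dg. ((\<lambda>t. U t k) has_real_derivative df) (at x) \<and>
        (rate_primitive \<beta> L has_real_derivative dg) (at x) \<and> \<bar>df\<bar> \<le> dg"
      using controlled_solutionD(2)[OF U, of x k] rate_primitive_has_real_derivative[OF b1, of x L] x st
      by auto
  qed
  show ?thesis
    using ordered[of s t] ordered[of t s] st by (cases "s \<le> t") (auto simp: abs_minus_commute)
qed

lemma controlled_limit_has_real_derivative: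
  assumes b: "\<beta> < 0 \<or> (0 < \<beta> \<and> \<beta> < 1)" and U: "\<And>n. controlled_solution \<beta> L (U n)"
    and conv: "\<And>k t. 0 \<le> t \<Longrightarrow> (\<lambda>n. U n t k) \<longlonglongrightarrow> u t k" and t: "0 < t"
  shows "((\<lambda>s. u s k) has_real_derivative dlap (\<lambda>j. Gb \<beta> (u t j)) k) (at t)"
proof -
  have b0: "\<beta> \<noteq> 0" "\<beta> < 1" using b by auto
  define \<eta> where "\<eta> = lower_profile \<beta> L (t/2)"
  have \<eta>0: "0 < \<eta>" unfolding \<eta>_def using lower_profile_pos[OF b, of "t/2" L] t by simp
  define K where "K = Gb_Lipschitz_const \<beta> \<eta>"
  define M where "M = rate_bound \<beta> L (t/2) + rate_bound \<beta> L (3 * t / 2)"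
  show ?thesis
  proof (rule has_real_derivative_of_Lipschitz_DERIV_seq[where f = "\<lambda>n s. U n s k"
        and D = "\<lambda>n x. dlap (\<lambda>j. Gb \<beta> (U n x j)) k" and M = "4 * K * M" and r = "t/2"])
    fix n x assume x: "\<bar>x - t\<bar> < t/2"
    then have "x - t < t/2 \<and> - (x - t) < t/2" by (simp only: abs_less_iff)
    then have xt: "t/2 < x" "0 < x" using t by linarith+
    show "((\<lambda>s. U n s k) has_real_derivative dlap (\<lambda>j. Gb \<beta> (U n x j)) k) (at x)"
      using controlled_solutionD(2)[OF U xt(2)] .
    have "\<eta> \<le> lower_profile \<beta> L x" "\<eta> \<le> lower_profile \<beta> L t"
      using lower_profile_mono[OF b, of "t/2" x L] lower_profile_mono[OF b, of "t/2" t L] xt t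
      unfolding \<eta>_def by auto
    then have low: "\<eta> \<le> U n x j" "\<eta> \<le> U n t j" for j
      using controlled_solutionD(3)[OF U[of n], where t = x and k = j]
        controlled_solutionD(3)[OF U[of n], where t = t and k = j] xt t by linarith+
    have "\<bar>Gb \<beta> (U n x j) - Gb \<beta> (U n t j)\<bar> \<le> K * \<bar>U n x j - U n t j\<bar>" for j
      unfolding K_def using abs_Gb_diff_le[OF b0 \<eta>0 low(2) low(1)] .
    also have "\<dots> j \<le> K * (M * \<bar>x - t\<bar>)" for j
    proof -
      have "\<bar>U n x j - U n t j\<bar> \<le> \<bar>rate_primitive \<beta> L x - rate_primitive \<beta> L t\<bar>"
        using controlled_solution_modulus[OF b U] xt t by simp
      also have "\<dots> \<le> M * \<bar>x - t\<bar>" unfolding M_def by (rule rate_primitive_Lipschitz[OF b0(2) t x])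
      finally show ?thesis unfolding K_def by (intro mult_left_mono Gb_Lipschitz_const_nonneg)
    qed
    finally have G: "\<bar>Gb \<beta> (U n x j) - Gb \<beta> (U n t j)\<bar> \<le> K * (M * \<bar>x - t\<bar>)" for j .
    show "\<bar>dlap (\<lambda>j. Gb \<beta> (U n x j)) k - dlap (\<lambda>j. Gb \<beta> (U n t j)) k\<bar> \<le> 4 * K * M * \<bar>x - t\<bar>"
      using abs_dlap_diff_le[OF G] by (simp add: mult.assoc)
  next
    fix x assume "\<bar>x - t\<bar> < t/2"
    then have "x - t < t/2 \<and> - (x - t) < t/2" by (simp only: abs_less_iff)
    then show "(\<lambda>n. U n x k) \<longlonglongrightarrow> u x k" using t by (intro conv) linarith
  next
    have "lower_profile \<beta> L t \<le> u t j" for j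
      by (rule LIMSEQ_le_const[OF conv]) (use controlled_solutionD(3)[OF U] t in auto)
    then have "0 < u t j" for j
      using lower_profile_pos[OF b t, of L] less_le_trans by blast
    then have cont: "isCont (Gb \<beta>) (u t j)" for j
      using continuous_on_Gb[OF b0(1)] by (simp add: continuous_on_eq_continuous_at)
    have "(\<lambda>n. Gb \<beta> (U n t j)) \<longlonglongrightarrow> Gb \<beta> (u t j)" for j
      using isCont_tendsto_compose[OF cont conv[of t j]] t by simp
    then show "(\<lambda>n. dlap (\<lambda>j. Gb \<beta> (U n t j)) k) \<longlonglongrightarrow> dlap (\<lambda>j. Gb \<beta> (u t j)) k"
      unfolding dlap_def by (intro tendsto_intros)
  qed (use t in simp)
qed

lemma controlled_solution_limit:
  assumes b: "\<beta> < 0 \<or> (0 < \<beta> \<and> \<beta> < 1)" and U: "\<And>n. controlled_solution \<beta> L (U n)"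
    and conv: "\<And>k t. 0 \<le> t \<Longrightarrow> (\<lambda>n. U n t k) \<longlonglongrightarrow> u t k"
  shows "controlled_solution \<beta> L u"
proof -
  have b0: "\<beta> \<noteq> 0" "\<beta> < 1" using b by auto
  have modulus: "\<bar>u t k - u s k\<bar> \<le> \<bar>rate_primitive \<beta> L t - rate_primitive \<beta> L s\<bar>"
    if "0 \<le> s" "0 \<le> t" for s t k
  proof (rule LIMSEQ_le_const2[where X = "\<lambda>n. \<bar>U n t k - U n s k\<bar>"])
    show "(\<lambda>n. \<bar>U n t k - U n s k\<bar>) \<longlonglongrightarrow> \<bar>u t k - u s k\<bar>"
      using conv[OF that(1)] conv[OF that(2)] by (intro tendsto_intros)
  qed (use controlled_solution_modulus[OF b U that] in blast)
  have bounds: "lower_profile \<beta> L t \<le> u t k" "u t k \<le> 1" if "0 \<le> t" for t k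
  proof -
    show "lower_profile \<beta> L t \<le> u t k"
      by (rule LIMSEQ_le_const[OF conv[OF that]]) (use controlled_solutionD(3)[OF U that] in blast)
    show "u t k \<le> 1"
      by (rule LIMSEQ_le_const2[OF conv[OF that]]) (use controlled_solutionD(4)[OF U that] in blast)
  qed
  moreover have "((\<lambda>s. u s k) has_real_derivative dlap (\<lambda>j. Gb \<beta> (u t j)) k) (at t)" if "0 < t" for t k
    using controlled_limit_has_real_derivative[OF b U conv that] .
  moreover have "continuous_on {0..} (\<lambda>t. u t k)" for k
    by (rule continuous_on_of_dominated_increments[OF _ continuous_on_rate_primitive[OF b0(2)]])
      (use modulus in auto)
  ultimately show ?thesis unfolding controlled_solution_def using bounds by blast
qed

lemma classical_solution_of_controlled:
  assumes b: "\<beta> < 0 \<or> (0 < \<beta> \<and> \<beta> < 1)" and u: "controlled_solution \<beta> L u"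
  shows "classical_solution \<beta> (u 0) u"
proof -
  have pos: "0 < u t k" if "0 < t" for t k
    using controlled_solutionD(3)[OF u, where t = t and k = k] lower_profile_pos[OF b that, of L] that by simp
  have nonneg: "0 \<le> u t k" if "0 \<le> t" for t k
    using controlled_solutionD(3)[OF u, where t = t and k = k] that lower_profile_nonneg[OF b, of L t]
    by linarith
  show ?thesis
    unfolding classical_solution_def cont_linf_plus_def linf_plus_def
  proof (intro conjI allI impI)
    fix t :: real assume t: "0 \<le> t"
    show "\<exists>B. \<forall>k. \<bar>u t k\<bar> \<le> B"
      using nonneg[OF t] controlled_solutionD(4)[OF u t] by (intro exI[of _ 1]) simp
    show "0 \<le> u t k" for k using nonneg[OF t] .
    fix e :: real assume e: "0 < e"
    have "\<forall>x\<in>{0..}. \<forall>e>0. \<exists>d>0. \<forall>s\<in>{0..}.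
        dist s x < d \<longrightarrow> dist (rate_primitive \<beta> L s) (rate_primitive \<beta> L x) < e"
      using continuous_on_rate_primitive[of \<beta> L] b unfolding continuous_on_iff by auto
    then obtain d where d: "0 < d" "\<And>s. s \<in> {0..} \<Longrightarrow> dist s t < d \<Longrightarrow>
        dist (rate_primitive \<beta> L s) (rate_primitive \<beta> L t) < e"
      using t e by blast
    show "\<exists>d>0. \<forall>s\<ge>0. \<bar>s - t\<bar> < d \<longrightarrow> (\<forall>k. \<bar>u s k - u t k\<bar> \<le> e)"
    proof (intro exI[of _ d] conjI allI impI d(1))
      fix s k assume s: "0 \<le> s" "\<bar>s - t\<bar> < d"
      then have "\<bar>rate_primitive \<beta> L s - rate_primitive \<beta> L t\<bar> < e"
        using d(2)[of s] by (simp add: dist_real_def)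
      then show "\<bar>u s k - u t k\<bar> \<le> e" using controlled_solution_modulus[OF b u t s(1), of k] by simp
    qed
  next
    fix k :: int and t :: real assume t: "0 < t"
    show "0 < u t k" using pos[OF t] .
    show "((\<lambda>s. u s k) has_real_derivative dlap (\<lambda>j. Gb \<beta> (u t j)) k) (at t)"
      using controlled_solutionD(2)[OF u t] .
  next
    fix k :: int
    have "continuous_on {0<..} (\<lambda>t. u t j)" for j
      using controlled_solutionD(1)[OF u] by (rule continuous_on_subset) auto
    then have "continuous_on {0<..} (\<lambda>t. Gb \<beta> (u t j))" for j
      using b pos by (intro continuous_on_Gb_comp) auto
    then have "continuous_on {0<..} (\<lambda>t. dlap (\<lambda>j. Gb \<beta> (u t j)) k)"
      unfolding dlap_def by (intro continuous_intros)
    then show "\<exists>u'. continuous_on {0<..} u' \<and> (\<forall>t>0. ((\<lambda>s. u s k) has_real_derivative u' t) (at t))"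
      using controlled_solutionD(2)[OF u] by blast
  qed simp
qed

lemma exists_controlled_solution:
  fixes \<Psi> :: "int \<Rightarrow> int" and u0 :: "int \<Rightarrow> real"
  assumes b: "\<beta> < 0 \<or> (0 < \<beta> \<and> \<beta> < 1)" and u0: "\<And>k. 1/2 \<le> u0 k \<and> u0 k \<le> 1"
    and sm: "strict_mono \<Psi>" and jumps: "\<And>k. jumps \<Psi> k \<le> int L"
  shows "\<exists>u. u 0 = creation \<Psi> u0 \<and> controlled_solution \<beta> L u"
proof -
  have b0: "\<beta> \<noteq> 0" "\<beta> < 1" using b by auto
  define w where "w = creation \<Psi> u0"
  have w: "0 \<le> w k \<and> w k \<le> 1" for k
    unfolding w_def creation_def using u0[of "inv \<Psi> k"] by auto
  have w_created: "1/2 \<le> w k" if "left_gap \<Psi> k = 0" for k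
    using that left_gap_eq_0_iff[OF sm jumps] u0 unfolding w_def creation_def by auto
  define \<delta> where "\<delta> n = max_regularization \<beta> L / real (Suc n)" for n
  have \<delta>max: "0 < max_regularization \<beta> L" "max_regularization \<beta> L \<le> 1/2"
    using max_regularization_pos[OF b, of L] unfolding max_regularization_def by auto
  have \<delta>: "0 < \<delta> n" "\<delta> n \<le> max_regularization \<beta> L" for n
    unfolding \<delta>_def using \<delta>max by (auto simp: divide_le_eq)
  have \<delta>_Suc: "\<delta> (Suc n) \<le> \<delta> n" for n
    unfolding \<delta>_def using \<delta>max by (intro divide_left_mono) auto
  have \<delta>_lim: "\<delta> \<longlonglongrightarrow> 0"
    unfolding \<delta>_def by (rule LIMSEQ_Suc[OF lim_const_over_n])
  have "\<exists>U. strip_solution \<beta> (\<delta> n) (\<lambda>k. max (w k) (\<delta> n)) U" for n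
    using \<delta>[of n] \<delta>max w by (intro strip_solution_exists[OF b0]) (auto simp: le_max_iff_disj)
  then obtain U where U: "\<And>n. strip_solution \<beta> (\<delta> n) (\<lambda>k. max (w k) (\<delta> n)) (U n)" by metis
  have low: "lower_const \<beta> L * min 1 (t powr scaling_exp \<beta>) \<le> U n t k" if "0 \<le> t" for n t k
    by (rule strip_solution_lower_bound[OF b gap_profile_left_gap[OF sm jumps] U[of n] \<delta>[of n] _ that])
      (use w_created in \<open>auto simp: le_max_iff_disj\<close>)
  have controlled: "controlled_solution \<beta> L (U n)" for n
    unfolding controlled_solution_def lower_profile_def
    using strip_solutionD(2,4,5)[OF U[of n]] low by blast
  have decreasing: "U (Suc n) t k \<le> U n t k" if "0 \<le> t" for n t k
    using \<delta>_Suc[of n] by (intro strip_solution_le[OF b0 \<delta>(1) \<delta>(1) U[of n] U[of "Suc n"] _ that]) auto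
  define u where "u t k = (INF n. U n t k)" for t k
  have conv: "(\<lambda>n. U n t k) \<longlonglongrightarrow> u t k" if "0 \<le> t" for t k
    unfolding u_def
  proof (rule LIMSEQ_decseq_INF)
    show "bdd_below (range (\<lambda>n. U n t k))"
    proof (rule bdd_belowI[of _ 0])
      fix x assume "x \<in> range (\<lambda>n. U n t k)"
      then obtain n where "x = U n t k" by blast
      then show "0 \<le> x" using strip_solutionD(3)[OF U[of n] that, of k] \<delta>(1)[of n] by linarith
    qed
    show "decseq (\<lambda>n. U n t k)" using decreasing that by (intro decseq_SucI) auto
  qed
  have "u 0 = w"
  proof
    fix k
    have "(\<lambda>n. U n 0 k) \<longlonglongrightarrow> max (w k) 0"
      unfolding strip_solutionD(1)[OF U] by (intro tendsto_intros \<delta>_lim)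
    then show "u 0 k = w k" using conv[of 0 k] w[of k] LIMSEQ_unique by fastforce
  qed
  then show ?thesis
    using controlled_solution_limit[OF b controlled conv] unfolding w_def by blast
qed

theorem lemma4p3:
  fixes \<beta> :: real and L :: nat
  assumes "\<beta> < 0 \<or> (0 < \<beta> \<and> \<beta> < 1)"
  shows "\<exists>c>0. \<forall>(u0 :: int \<Rightarrow> real) (\<Psi> :: int \<Rightarrow> int).
           linf_plus u0 \<and> (\<forall>k. 1/2 \<le> u0 k \<and> u0 k \<le> 1) \<and>
           strict_mono \<Psi> \<and> (\<forall>k. jumps \<Psi> k \<le> int L) \<longrightarrow>
           (\<exists>u. classical_solution \<beta> (creation \<Psi> u0) u \<and>
                (\<forall>t\<ge>0. \<forall>k. u t k \<le> 1) \<and>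
                (\<forall>t\<ge>0. \<forall>k. c * min 1 (t powr (1 / (1 - \<beta>))) \<le> u t k))"
proof (intro exI[of _ "lower_const \<beta> L"] conjI allI impI)
  show "0 < lower_const \<beta> L" using lower_const_pos[OF assms] .
  fix u0 :: "int \<Rightarrow> real" and \<Psi> :: "int \<Rightarrow> int"
  assume "linf_plus u0 \<and> (\<forall>k. 1/2 \<le> u0 k \<and> u0 k \<le> 1) \<and> strict_mono \<Psi> \<and> (\<forall>k. jumps \<Psi> k \<le> int L)"
  then obtain u where u0: "u 0 = creation \<Psi> u0" and u: "controlled_solution \<beta> L u"
    using exists_controlled_solution[OF assms] by blast
  show "\<exists>u. classical_solution \<beta> (creation \<Psi> u0) u \<and> (\<forall>t\<ge>0. \<forall>k. u t k \<le> 1) \<and>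
      (\<forall>t\<ge>0. \<forall>k. lower_const \<beta> L * min 1 (t powr (1 / (1 - \<beta>))) \<le> u t k)"
    using classical_solution_of_controlled[OF assms u] controlled_solutionD(3,4)[OF u]
    unfolding u0 lower_profile_def scaling_exp_def by blast
qed

end
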